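(* Let $\psi$ be a state on $\mathcal L(\mathcal H)$. (a) The set of eigenvalues of modulus 1 of $L(\psi)$ is a (finite) subgroup of $U(1)$, and likewise for $\rho(\psi)$; in particular these eigenvalues are roots of unity. (b) There exist pre-subgroups $f,g$ of $V$ such that the subspace spanned by the eigenvectors of $L(\psi)$ for eigenvalues of modulus 1 equals $H^f$, and the subspace spanned by the eigenvectors of $\rho(\psi)$ for eigenvalues of modulus 1 equals $H_g$.
   Context: Let $\mathcal H$ be a finite-dimensional Hilbert space and $V$ a multiplicative unitary on $\mathcal H$ ($V_{12}V_{13}V_{23}=V_{23}V_{12}$) of multiplicity 1 (one-dimensional space of fixed vectors $\xi$, i.e. $V(\xi\otimes\eta)=\xi\otimes\eta$ for all $\eta$). Fix a unit fixed vector $e$. $L(\omega)=(\omega\otimes\mathrm{id})(V)$, $\rho(\omega)=(\mathrm{id}\otimes\omega)(V)$ for $\omega\in\mathcal L(\mathcal H)^*$. A pre-subgroup is $f\in\mathcal H$ with $\|f\|=1$, $\langle f,e\rangle>0$, $V(f\otimes f)=f\otimes f$; $H^f=\{\eta:V(f\otimes\eta)=f\otimes\eta\}$, $H_f=\{\eta:V(\eta\otimes f)=\eta\otimes f\}$. *)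

theory Defs
  imports Complex_Main
begin

text \<open>Finite-dimensional Hilbert space H = C^I with I a finite index type (orthonormal basis).
 H (x) H has index type I x I, H (x) H (x) H has index type I x I x I.\<close>

type_synonym 'i hvec = "'i \<Rightarrow> complex"
type_synonym 'i hop = "'i \<Rightarrow> 'i \<Rightarrow> complex"

definition mv :: "'i::finite hop \<Rightarrow> 'i hvec \<Rightarrow> 'i hvec" where
  "mv A x = (\<lambda>i. \<Sum>j\<in>UNIV. A i j * x j)"

definition mm :: "'i::finite hop \<Rightarrow> 'i hop \<Rightarrow> 'i hop" where
  "mm A B = (\<lambda>i k. \<Sum>j\<in>UNIV. A i j * B j k)"

definition idop :: "'i hop" where
  "idop = (\<lambda>i j. if i = j then 1 else 0)"

definition adj :: "'i hop \<Rightarrow> 'i hop" where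
  "adj A = (\<lambda>i j. cnj (A j i))"

definition unitary_op :: "'i::finite hop \<Rightarrow> bool" where
  "unitary_op A \<longleftrightarrow> mm A (adj A) = idop \<and> mm (adj A) A = idop"

definition cinner :: "'i::finite hvec \<Rightarrow> 'i hvec \<Rightarrow> complex" where
  "cinner x y = (\<Sum>i\<in>UNIV. x i * cnj (y i))"

definition hnorm :: "'i::finite hvec \<Rightarrow> real" where
  "hnorm x = sqrt (\<Sum>i\<in>UNIV. (cmod (x i))\<^sup>2)"

definition tens :: "'i hvec \<Rightarrow> 'i hvec \<Rightarrow> ('i \<times> 'i) hvec" where
  "tens x y = (\<lambda>(i, j). x i * y j)"

definition cspan :: "'i hvec set \<Rightarrow> 'i hvec set" where
  "cspan E = {v. \<exists>S c. finite S \<and> S \<subseteq> E \<and> v = (\<lambda>i. \<Sum>x\<in>S. c x * x i)}"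

definition leg12 :: "('i \<times> 'i) hop \<Rightarrow> ('i \<times> 'i \<times> 'i) hop" where
  "leg12 V = (\<lambda>(a, b, c) (a', b', c'). V (a, b) (a', b') * (if c = c' then 1 else 0))"

definition leg13 :: "('i \<times> 'i) hop \<Rightarrow> ('i \<times> 'i \<times> 'i) hop" where
  "leg13 V = (\<lambda>(a, b, c) (a', b', c'). V (a, c) (a', c') * (if b = b' then 1 else 0))"

definition leg23 :: "('i \<times> 'i) hop \<Rightarrow> ('i \<times> 'i \<times> 'i) hop" where
  "leg23 V = (\<lambda>(a, b, c) (a', b', c'). V (b, c) (b', c') * (if a = a' then 1 else 0))"

definition multiplicative_unitary :: "('i::finite \<times> 'i) hop \<Rightarrow> bool" where
  "multiplicative_unitary V \<longleftrightarrow> unitary_op V \<and>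
     mm (mm (leg12 V) (leg13 V)) (leg23 V) = mm (leg23 V) (leg12 V)"

definition fixed_vec :: "('i::finite \<times> 'i) hop \<Rightarrow> 'i hvec \<Rightarrow> bool" where
  "fixed_vec V \<xi> \<longleftrightarrow> (\<forall>\<eta>. mv V (tens \<xi> \<eta>) = tens \<xi> \<eta>)"

definition multiplicity_one :: "('i::finite \<times> 'i) hop \<Rightarrow> bool" where
  "multiplicity_one V \<longleftrightarrow> (\<exists>\<xi>. \<xi> \<noteq> (\<lambda>_. 0) \<and> fixed_vec V \<xi>) \<and>
     (\<forall>\<xi> \<xi>'. fixed_vec V \<xi> \<and> fixed_vec V \<xi>' \<and> \<xi> \<noteq> (\<lambda>_. 0) \<longrightarrow> (\<exists>c. \<xi>' = (\<lambda>i. c * \<xi> i)))"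

text \<open>V = sum_{b,b'} M_{bb'} (x) E_{bb'} with M_{bb'} a a' = V (a,b) (a',b'), so
 (omega (x) id)(V) has matrix entries omega(M_{bb'}); similarly for (id (x) omega)(V).\<close>
definition linear_functional :: "('i::finite hop \<Rightarrow> complex) \<Rightarrow> bool" where
  "linear_functional \<omega> \<longleftrightarrow> (\<forall>A B. \<omega> (\<lambda>i j. A i j + B i j) = \<omega> A + \<omega> B) \<and>
     (\<forall>c A. \<omega> (\<lambda>i j. c * A i j) = c * \<omega> A)"

definition is_state :: "('i::finite hop \<Rightarrow> complex) \<Rightarrow> bool" where
  "is_state \<psi> \<longleftrightarrow> linear_functional \<psi> \<and> \<psi> idop = 1 \<and>
     (\<forall>A. Im (\<psi> (mm (adj A) A)) = 0 \<and> Re (\<psi> (mm (adj A) A)) \<ge> 0)"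

definition Lslice :: "('i \<times> 'i) hop \<Rightarrow> ('i hop \<Rightarrow> complex) \<Rightarrow> 'i hop" where
  "Lslice V \<omega> = (\<lambda>b b'. \<omega> (\<lambda>a a'. V (a, b) (a', b')))"

definition Rslice :: "('i \<times> 'i) hop \<Rightarrow> ('i hop \<Rightarrow> complex) \<Rightarrow> 'i hop" where
  "Rslice V \<omega> = (\<lambda>a a'. \<omega> (\<lambda>b b'. V (a, b) (a', b')))"

definition unimodular_eigenvalues :: "'i::finite hop \<Rightarrow> complex set" where
  "unimodular_eigenvalues T = {z. cmod z = 1 \<and> (\<exists>x. x \<noteq> (\<lambda>_. 0) \<and> mv T x = (\<lambda>i. z * x i))}"

definition unimodular_eigenvectors :: "'i::finite hop \<Rightarrow> 'i hvec set" where
  "unimodular_eigenvectors T = {x. x \<noteq> (\<lambda>_. 0) \<and> (\<exists>z. cmod z = 1 \<and> mv T x = (\<lambda>i. z * x i))}"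

definition finite_subgroup_U1 :: "complex set \<Rightarrow> bool" where
  "finite_subgroup_U1 G \<longleftrightarrow> finite G \<and> G \<subseteq> {z. cmod z = 1} \<and> 1 \<in> G \<and>
     (\<forall>x\<in>G. \<forall>y\<in>G. x * y \<in> G) \<and> (\<forall>x\<in>G. inverse x \<in> G)"

definition pre_subgroup :: "('i::finite \<times> 'i) hop \<Rightarrow> 'i hvec \<Rightarrow> 'i hvec \<Rightarrow> bool" where
  "pre_subgroup V e f \<longleftrightarrow> hnorm f = 1 \<and> Im (cinner f e) = 0 \<and> Re (cinner f e) > 0 \<and>
     mv V (tens f f) = tens f f"

definition Hsup :: "('i::finite \<times> 'i) hop \<Rightarrow> 'i hvec \<Rightarrow> 'i hvec set" where
  "Hsup V f = {\<eta>. mv V (tens f \<eta>) = tens f \<eta>}"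

definition Hsub :: "('i::finite \<times> 'i) hop \<Rightarrow> 'i hvec \<Rightarrow> 'i hvec set" where
  "Hsub V f = {\<eta>. mv V (tens \<eta> f) = tens \<eta> f}"

end

theory Submission
  imports Defs "HOL-Analysis.Analysis"
begin

(* Write T = L(psi). Since V is unitary and psi is a state, T is a contraction, and wherever T
   is isometric the relevant slices of V lie in the multiplicative domain of psi. Hence
   eigenvectors of T for distinct unimodular eigenvalues are orthogonal, so there are finitely
   many such eigenvalues, and the pentagon equation turns eigenvectors for z1 and z2 into one
   for z1 z2 (a column of V^*(eta2 (x) eta1)). A co-fixed vector h (with V(xi (x) h) = xi (x) h)
   is fixed by T, so the unimodular eigenvalues form a finite subgroup of U(1) and are d-th
   roots of unity for a common d; their eigenvectors span exactly the T^d-fixed vectors.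

   Decompose the fixed vector e = (y - T^d y) + f with f orthogonal to the range of I - T^d.
   Then T^d f = f, and averaging W(T^(dn) e (x) eta) = T^(dn) e (x) eta over n shows that every
   T^d-fixed eta lies in H^f; conversely the slice (omega_f (x) id)(V) commutes with T^d and
   is |f|^2 on H^f, so H^f consists of T^d-fixed vectors. Normalizing f gives the
   pre-subgroup, with <f, e> = |f|^2 > 0.

   The statements for rho(psi) follow by the same argument for the dual unitary
   hatV = Sigma V^* Sigma, whose left slice map is rho(psi)^*. The co-fixed vector needed on
   both sides is h = L(tr) e for the normalized trace tr: L(tr) is idempotent, its fixed
   vectors are co-fixed, and <h, e> > 0. *)

lemma sum_UNIV_prod:
  "(\<Sum>p\<in>(UNIV::('a::finite \<times> 'b::finite) set). f p) = (\<Sum>a\<in>UNIV. \<Sum>b\<in>UNIV. f (a, b))"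
proof -
  have "(\<Sum>p\<in>(UNIV::('a \<times> 'b) set). f p) = (\<Sum>p\<in>UNIV \<times> UNIV. f p)" by simp
  then show ?thesis by (simp add: sum.cartesian_product)
qed

lemma sum_rotate3:
  "(\<Sum>x\<in>(UNIV::'a::finite set). \<Sum>a\<in>(UNIV::'b::finite set). \<Sum>b\<in>(UNIV::'c::finite set). f x a b) =
   (\<Sum>a\<in>UNIV. \<Sum>b\<in>UNIV. \<Sum>x\<in>UNIV. f x a b)"
proof -
  have "(\<Sum>x\<in>(UNIV::'a set). \<Sum>a\<in>(UNIV::'b set). \<Sum>b\<in>(UNIV::'c set). f x a b) =
        (\<Sum>x\<in>UNIV. \<Sum>q\<in>UNIV. f x (fst q) (snd q))" by (simp add: sum_UNIV_prod)
  also have "\<dots> = (\<Sum>q\<in>UNIV. \<Sum>x\<in>UNIV. f x (fst q) (snd q))" by (rule sum.swap)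
  finally show ?thesis by (simp add: sum_UNIV_prod)
qed

lemma sum_reverse3:
  "(\<Sum>a\<in>(UNIV::'a::finite set). \<Sum>b\<in>(UNIV::'b::finite set). \<Sum>c\<in>(UNIV::'c::finite set). f a b c) =
   (\<Sum>c\<in>UNIV. \<Sum>b\<in>UNIV. \<Sum>a\<in>UNIV. f a b c)"
proof -
  have "(\<Sum>a\<in>(UNIV::'a set). \<Sum>b\<in>(UNIV::'b set). \<Sum>c\<in>(UNIV::'c set). f a b c) =
        (\<Sum>a\<in>(UNIV::'a set). \<Sum>c\<in>(UNIV::'c set). \<Sum>b\<in>(UNIV::'b set). f a b c)"
    by (intro sum.cong refl sum.swap)
  also have "\<dots> = (\<Sum>c\<in>UNIV. \<Sum>b\<in>UNIV. \<Sum>a\<in>UNIV. f a b c)" by (rule sum_rotate3)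
  finally show ?thesis .
qed

lemma sum_swap_pairs:
  "(\<Sum>a\<in>(UNIV::'a::finite set). \<Sum>b\<in>(UNIV::'b::finite set). \<Sum>c\<in>(UNIV::'c::finite set).
      \<Sum>d\<in>(UNIV::'d::finite set). f a b c d) =
   (\<Sum>c\<in>UNIV. \<Sum>d\<in>UNIV. \<Sum>a\<in>UNIV. \<Sum>b\<in>UNIV. f a b c d)"
proof -
  have "(\<Sum>a\<in>(UNIV::'a set). \<Sum>b\<in>(UNIV::'b set). \<Sum>c\<in>(UNIV::'c set). \<Sum>d\<in>(UNIV::'d set). f a b c d) =
        (\<Sum>p\<in>UNIV. \<Sum>q\<in>UNIV. f (fst p) (snd p) (fst q) (snd q))" by (simp add: sum_UNIV_prod)
  also have "\<dots> = (\<Sum>q\<in>UNIV. \<Sum>p\<in>UNIV. f (fst p) (snd p) (fst q) (snd q))" by (rule sum.swap)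
  finally show ?thesis by (simp add: sum_UNIV_prod)
qed

lemma sum_rotate4:
  "(\<Sum>x\<in>(UNIV::'a::finite set). \<Sum>a\<in>(UNIV::'b::finite set). \<Sum>b\<in>(UNIV::'c::finite set).
      \<Sum>c\<in>(UNIV::'d::finite set). f x a b c) =
   (\<Sum>a\<in>UNIV. \<Sum>b\<in>UNIV. \<Sum>c\<in>UNIV. \<Sum>x\<in>UNIV. f x a b c)"
proof -
  have "(\<Sum>x\<in>(UNIV::'a set). \<Sum>a\<in>(UNIV::'b set). \<Sum>b\<in>(UNIV::'c set). \<Sum>c\<in>(UNIV::'d set). f x a b c) =
        (\<Sum>x\<in>UNIV. \<Sum>p\<in>UNIV. \<Sum>c\<in>UNIV. f x (fst p) (snd p) c)" by (simp add: sum_UNIV_prod)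
  also have "\<dots> = (\<Sum>p\<in>UNIV. \<Sum>c\<in>UNIV. \<Sum>x\<in>UNIV. f x (fst p) (snd p) c)" by (rule sum_rotate3)
  finally show ?thesis by (simp add: sum_UNIV_prod)
qed

lemma sum_swap_pair_triple:
  "(\<Sum>a\<in>(UNIV::'a::finite set). \<Sum>b\<in>(UNIV::'b::finite set). \<Sum>x\<in>(UNIV::'c::finite set).
      \<Sum>y\<in>(UNIV::'d::finite set). \<Sum>z\<in>(UNIV::'e::finite set). f a b x y z) =
   (\<Sum>x\<in>UNIV. \<Sum>y\<in>UNIV. \<Sum>z\<in>UNIV. \<Sum>a\<in>UNIV. \<Sum>b\<in>UNIV. f a b x y z)"
proof -
  have "(\<Sum>a\<in>(UNIV::'a set). \<Sum>b\<in>(UNIV::'b set). \<Sum>x\<in>(UNIV::'c set). \<Sum>y\<in>(UNIV::'d set).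
          \<Sum>z\<in>(UNIV::'e set). f a b x y z) =
        (\<Sum>p\<in>UNIV. \<Sum>t\<in>UNIV. f (fst p) (snd p) (fst t) (fst (snd t)) (snd (snd t)))"
    by (simp add: sum_UNIV_prod)
  also have "\<dots> = (\<Sum>t\<in>UNIV. \<Sum>p\<in>UNIV. f (fst p) (snd p) (fst t) (fst (snd t)) (snd (snd t)))"
    by (rule sum.swap)
  finally show ?thesis by (simp add: sum_UNIV_prod)
qed

lemma sum_mult_delta [simp]:
  "(\<Sum>k\<in>(UNIV::_::finite set). f k * (if k = a then 1 else 0)) = (f a :: complex)"
  "(\<Sum>k\<in>(UNIV::_::finite set). f k * (if a = k then 1 else 0)) = (f a :: complex)"
  "(\<Sum>k\<in>(UNIV::_::finite set). (if k = a then 1 else 0) * f k) = (f a :: complex)"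
  "(\<Sum>k\<in>(UNIV::_::finite set). (if a = k then 1 else 0) * f k) = (f a :: complex)"
  by (simp_all add: if_distrib[of "\<lambda>x. _ * x"] if_distrib[of "\<lambda>x. x * _"] cong: if_cong)

lemma if_zero_simps:
  "(x::complex) * (if P then 1 else 0) = (if P then x else 0)"
  "(if P then 1 else 0) * (x::complex) = (if P then x else 0)"
  "(if P then x else 0) * (y::complex) = (if P then x * y else 0)"
  "(y::complex) * (if P then x else 0) = (if P then y * x else 0)"
  "(\<Sum>k\<in>S. if P then f k else (0::complex)) = (if P then (\<Sum>k\<in>S. f k) else 0)"
  "cnj (if P then x else 0) = (if P then cnj x else 0)"
  by simp_all

lemmas delta_simps = if_zero_simps sum.delta sum.delta'

lemma mm_assoc: "mm (mm A B) C = mm A (mm B C)"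
  unfolding mm_def
  by (intro ext) (simp add: sum_distrib_left sum_distrib_right mult.assoc, rule sum.swap)

lemma mm_idop [simp]: "mm idop A = A" "mm A idop = A"
  unfolding mm_def idop_def by simp_all

lemma adj_adj [simp]: "adj (adj A) = A"
  unfolding adj_def by simp

lemma adj_idop [simp]: "adj idop = idop"
  unfolding adj_def idop_def by (auto intro!: ext)

lemma adj_mm: "adj (mm A B) = mm (adj B) (adj A)"
  unfolding adj_def mm_def by (auto intro!: ext simp: mult.commute)

lemma mm_lincomb_right: "mm Z (\<lambda>i j. A i j + c * B i j) = (\<lambda>i j. mm Z A i j + c * mm Z B i j)"
  unfolding mm_def by (auto intro!: ext simp: algebra_simps sum.distrib sum_distrib_left)

lemma mm_lincomb_left: "mm (\<lambda>i j. A i j + c * B i j) Z = (\<lambda>i j. mm A Z i j + c * mm B Z i j)"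
  unfolding mm_def by (auto intro!: ext simp: algebra_simps sum.distrib sum_distrib_left)

lemma adj_lincomb: "adj (\<lambda>i j. A i j + c * B i j) = (\<lambda>i j. adj A i j + cnj c * adj B i j)"
  unfolding adj_def by auto

lemma mm_adj_self_lincomb:
  "mm (adj (\<lambda>i j. A i j + c * B i j)) (\<lambda>i j. A i j + c * B i j) =
   (\<lambda>i j. mm (adj A) A i j + (c * mm (adj A) B i j +
      (cnj c * mm (adj B) A i j + (cnj c * c) * mm (adj B) B i j)))"
  unfolding mm_def adj_def
  by (auto intro!: ext simp: algebra_simps sum.distrib sum_distrib_left)

lemma mv_mm: "mv (mm A B) x = mv A (mv B x)"
  unfolding mv_def mm_def
  by (intro ext) (simp add: sum_distrib_left sum_distrib_right mult.assoc, rule sum.swap)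

lemma mv_idop [simp]: "mv idop x = x"
  unfolding mv_def idop_def by simp

lemma mv_add: "mv A (\<lambda>i. x i + y i) = (\<lambda>i. mv A x i + mv A y i)"
  unfolding mv_def by (simp add: distrib_left sum.distrib)

lemma mv_diff: "mv A (\<lambda>i. x i - y i) = (\<lambda>i. mv A x i - mv A y i)"
  unfolding mv_def by (simp add: right_diff_distrib sum_subtractf)

lemma mv_scale: "mv A (\<lambda>i. c * x i) = (\<lambda>i. c * mv A x i)"
  unfolding mv_def by (simp add: sum_distrib_left mult.left_commute)

lemma mv_zero [simp]: "mv A (\<lambda>i. 0) = (\<lambda>i. 0)"
  unfolding mv_def by simp

lemma mv_lincomb_sum: "mv A (\<lambda>i. \<Sum>k\<in>S. c k * v k i) = (\<lambda>i. \<Sum>k\<in>S. c k * mv A (v k) i)"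
  unfolding mv_def by (rule ext) (simp add: sum_distrib_left mult_ac sum.swap[of _ S UNIV])

definition basis_vec :: "'i \<Rightarrow> 'i hvec" where
  "basis_vec i = (\<lambda>k. if k = i then 1 else 0)"

lemma mv_basis_vec: "mv A (basis_vec j) = (\<lambda>a. A a j)"
  unfolding mv_def basis_vec_def by (simp add: if_distrib cong: if_cong)

definition sqnorm :: "'i::finite hvec \<Rightarrow> real" where
  "sqnorm x = (\<Sum>i\<in>UNIV. (cmod (x i))\<^sup>2)"

lemma sqnorm_nonneg: "sqnorm x \<ge> 0"
  unfolding sqnorm_def by (simp add: sum_nonneg)

lemma hnorm_sqnorm: "hnorm x = sqrt (sqnorm x)"
  unfolding hnorm_def sqnorm_def by simp

lemma sqnorm_eq_0_iff: "sqnorm x = 0 \<longleftrightarrow> x = (\<lambda>_. 0)"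
  unfolding sqnorm_def by (subst sum_nonneg_eq_0_iff) (auto simp: fun_eq_iff)

lemma sqnorm_pos: "x \<noteq> (\<lambda>_. 0) \<Longrightarrow> sqnorm x > 0"
  using sqnorm_nonneg[of x] sqnorm_eq_0_iff[of x] by linarith

lemma sqnorm_scale: "sqnorm (\<lambda>i. z * w i) = (cmod z)\<^sup>2 * sqnorm w"
  unfolding sqnorm_def by (simp add: norm_mult power_mult_distrib sum_distrib_left)

lemma norm_component_le: "cmod (x p) \<le> sqrt (sqnorm x)"
proof -
  have "(cmod (x p))\<^sup>2 \<le> sqnorm x"
    unfolding sqnorm_def by (rule member_le_sum) auto
  then show ?thesis by (simp add: real_le_rsqrt)
qed

lemma cinner_self: "cinner x x = of_real (sqnorm x)"
  unfolding cinner_def sqnorm_def by (simp add: complex_mult_cnj cmod_def)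

lemma cinner_zero [simp]: "cinner (\<lambda>i. 0) z = 0" "cinner z (\<lambda>i. 0) = 0"
  unfolding cinner_def by simp_all

lemma cinner_cnj: "cinner y x = cnj (cinner x y)"
  unfolding cinner_def by (simp add: mult.commute)

lemma cinner_adj: "cinner (mv A x) y = cinner x (mv (adj A) y)"
proof -
  have "cinner (mv A x) y = (\<Sum>i\<in>UNIV. \<Sum>j\<in>UNIV. A i j * x j * cnj (y i))"
    unfolding cinner_def mv_def by (simp add: sum_distrib_right)
  also have "\<dots> = (\<Sum>j\<in>UNIV. \<Sum>i\<in>UNIV. A i j * x j * cnj (y i))"
    by (rule sum.swap)
  also have "\<dots> = cinner x (mv (adj A) y)"
    unfolding cinner_def mv_def adj_def by (simp add: sum_distrib_left mult_ac)
  finally show ?thesis .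
qed

lemma cinner_add_left: "cinner (\<lambda>i. x i + y i) z = cinner x z + cinner y z"
  unfolding cinner_def by (simp add: distrib_right sum.distrib)

lemma cinner_diff_left: "cinner (\<lambda>i. x i - y i) z = cinner x z - cinner y z"
  unfolding cinner_def by (simp add: left_diff_distrib sum_subtractf)

lemma cinner_scale_left: "cinner (\<lambda>i. c * x i) z = c * cinner x z"
  unfolding cinner_def by (simp add: sum_distrib_left mult.assoc)

lemma cinner_add_right: "cinner z (\<lambda>i. x i + y i) = cinner z x + cinner z y"
  unfolding cinner_def by (simp add: distrib_left sum.distrib)

lemma cinner_diff_right: "cinner z (\<lambda>i. x i - y i) = cinner z x - cinner z y"
  unfolding cinner_def by (simp add: right_diff_distrib sum_subtractf)

lemma cinner_scale_right: "cinner z (\<lambda>i. c * x i) = cnj c * cinner z x"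
  unfolding cinner_def by (simp add: sum_distrib_left mult_ac)

lemma cinner_basis_vec_right: "cinner x (basis_vec a) = x a"
  unfolding cinner_def basis_vec_def by (simp add: if_distrib[of cnj] cong: if_cong)

lemma cinner_basis_vec: "cinner (basis_vec j) (basis_vec i) = (if j = i then 1 else 0)"
  unfolding cinner_basis_vec_right by (simp add: basis_vec_def)

lemma sqnorm_add: "sqnorm (\<lambda>i. a i + b i) = sqnorm a + 2 * Re (cinner a b) + sqnorm b"
proof -
  have "of_real (sqnorm (\<lambda>i. a i + b i)) = cinner a a + cinner a b + cinner b a + cinner b b"
    unfolding cinner_self[symmetric] by (simp add: cinner_add_left cinner_add_right)
  also have "\<dots> = of_real (sqnorm a + 2 * Re (cinner a b) + sqnorm b)"
    by (simp add: cinner_self cinner_cnj[of b a] complex_add_cnj)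
  finally show ?thesis by (simp only: of_real_eq_iff)
qed

lemma sqnorm_diff: "sqnorm (\<lambda>i. a i - b i) = sqnorm a - 2 * Re (cinner a b) + sqnorm b"
  using sqnorm_add[of a "\<lambda>i. - b i"] sqnorm_scale[of "-1" b]
  by (simp add: cinner_scale_right[of a "-1" b, simplified])

lemma ext_cinner:
  assumes "\<And>y. cinner y u = cinner y v"
  shows "u = v"
proof -
  have "cinner (\<lambda>i. u i - v i) (\<lambda>i. u i - v i) = 0"
    using assms[of "\<lambda>i. u i - v i"] by (simp add: cinner_diff_right)
  then show ?thesis by (simp add: cinner_self sqnorm_eq_0_iff fun_eq_iff)
qed

lemma cinner_tens: "cinner (tens x y) (tens x' y') = cinner x x' * cinner y y'"
  unfolding cinner_def tens_def by (simp add: sum_UNIV_prod sum_product mult_ac)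

lemma sqnorm_tens: "sqnorm (tens v \<eta>) = sqnorm v * sqnorm \<eta>"
  using cinner_tens[of v \<eta> v \<eta>] by (simp add: cinner_self flip: of_real_mult)

lemma tens_scale_left: "tens (\<lambda>i. c * f i) \<eta> = (\<lambda>p. c * tens f \<eta> p)"
  unfolding tens_def by (auto intro!: ext simp: mult.assoc)

lemma tens_scale_right: "tens \<xi> (\<lambda>i. c * f i) = (\<lambda>p. c * tens \<xi> f p)"
  unfolding tens_def by (auto intro!: ext simp: mult_ac)

lemma tens_eq_0_iff: "tens \<xi> \<eta> = (\<lambda>_. 0) \<longleftrightarrow> \<xi> = (\<lambda>_. 0) \<or> \<eta> = (\<lambda>_. 0)"
  by (auto simp: tens_def fun_eq_iff)

lemma unitary_cinner:
  assumes "unitary_op W"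
  shows "cinner (mv W x) (mv W y) = cinner x y"
  using assms unfolding unitary_op_def by (simp add: cinner_adj mv_mm[symmetric])

lemma unitary_sqnorm:
  assumes "unitary_op W"
  shows "sqnorm (mv W x) = sqnorm x"
  using unitary_cinner[OF assms, of x x] by (simp add: cinner_self)

lemma unitary_mv_inverse:
  assumes "unitary_op W"
  shows "mv W (mv (adj W) x) = x" "mv (adj W) (mv W x) = x"
  using assms unfolding unitary_op_def by (simp_all add: mv_mm[symmetric])

lemma linear_functional_add: "linear_functional \<psi> \<Longrightarrow> \<psi> (\<lambda>i j. A i j + B i j) = \<psi> A + \<psi> B"
  unfolding linear_functional_def by blast

lemma linear_functional_scale: "linear_functional \<psi> \<Longrightarrow> \<psi> (\<lambda>i j. c * A i j) = c * \<psi> A"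
  unfolding linear_functional_def by blast

lemma linear_functional_zero: "linear_functional \<psi> \<Longrightarrow> \<psi> (\<lambda>i j. 0) = 0"
  using linear_functional_scale[of \<psi> 0 "\<lambda>i j. 0"] by simp

lemma linear_functional_sum:
  assumes lf: "linear_functional \<psi>" and fin: "finite S"
  shows "\<psi> (\<lambda>i j. \<Sum>k\<in>S. f k i j) = (\<Sum>k\<in>S. \<psi> (f k))"
  using fin
proof (induction S rule: finite_induct)
  case empty
  then show ?case by (simp add: linear_functional_zero[OF lf])
next
  case (insert x F)
  then show ?case using linear_functional_add[OF lf, of "f x" "\<lambda>i j. \<Sum>k\<in>F. f k i j"] by simp
qed

lemma linear_functional_sum2:
  assumes lf: "linear_functional \<psi>"
  shows "\<psi> (\<lambda>i j. \<Sum>a\<in>(UNIV::'a::finite set). \<Sum>b\<in>(UNIV::'b::finite set). f a b i j) =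
    (\<Sum>a\<in>UNIV. \<Sum>b\<in>UNIV. \<psi> (f a b))"
  by (simp add: linear_functional_sum[OF lf])

lemma linear_functional_lincomb4:
  assumes lf: "linear_functional \<psi>"
  shows "\<psi> (\<lambda>i j. P i j + (c1 * Q i j + (c2 * R i j + c3 * S i j))) =
    \<psi> P + c1 * \<psi> Q + c2 * \<psi> R + c3 * \<psi> S"
  by (simp add: linear_functional_add[OF lf] linear_functional_scale[OF lf])

lemma state_linear: "is_state \<psi> \<Longrightarrow> linear_functional \<psi>"
  unfolding is_state_def by blast

lemma state_idop: "is_state \<psi> \<Longrightarrow> \<psi> idop = 1"
  unfolding is_state_def by blast

lemma state_positive_Im: "is_state \<psi> \<Longrightarrow> Im (\<psi> (mm (adj A) A)) = 0"
  unfolding is_state_def by blast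

lemma state_positive_Re: "is_state \<psi> \<Longrightarrow> Re (\<psi> (mm (adj A) A)) \<ge> 0"
  unfolding is_state_def by blast

text \<open>Hermiticity is forced by positivity: test it on \<open>(I + X)\<^sup>* (I + X)\<close> and \<open>(I + iX)\<^sup>* (I + iX)\<close>.\<close>

lemma state_adj:
  assumes st: "is_state \<psi>"
  shows "\<psi> (adj X) = cnj (\<psi> X)"
proof -
  have lf: "linear_functional \<psi>" using st by (rule state_linear)
  have e1: "\<psi> (mm (adj (\<lambda>i j. idop i j + 1 * X i j)) (\<lambda>i j. idop i j + 1 * X i j)) =
      1 + \<psi> X + \<psi> (adj X) + \<psi> (mm (adj X) X)"
    unfolding mm_adj_self_lincomb linear_functional_lincomb4[OF lf] by (simp add: state_idop[OF st])
  have e2: "\<psi> (mm (adj (\<lambda>i j. idop i j + \<i> * X i j)) (\<lambda>i j. idop i j + \<i> * X i j)) =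
      1 + \<i> * \<psi> X - \<i> * \<psi> (adj X) + \<psi> (mm (adj X) X)"
    unfolding mm_adj_self_lincomb linear_functional_lincomb4[OF lf]
    by (simp add: state_idop[OF st] algebra_simps)
  show ?thesis
    using state_positive_Im[OF st, of "\<lambda>i j. idop i j + 1 * X i j"]
      state_positive_Im[OF st, of "\<lambda>i j. idop i j + \<i> * X i j"] state_positive_Im[OF st, of X]
    unfolding e1 e2 by (intro complex_eqI) auto
qed

text \<open>The Cauchy--Schwarz argument: positivity of \<open>\<psi>((Y + tZ\<^sup>*)\<^sup>* (Y + tZ\<^sup>*))\<close> for small
  \<open>t = -s \<psi>(ZY)\<close> forces \<open>\<psi>(ZY) = 0\<close>.\<close>

lemma state_null_mm_right:
  assumes st: "is_state \<psi>" and Y: "\<psi> (mm (adj Y) Y) = 0"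
  shows "\<psi> (mm Z Y) = 0"
proof -
  have lf: "linear_functional \<psi>" using st by (rule state_linear)
  define c where "c = \<psi> (mm Z Y)"
  define q where "q = Re (\<psi> (mm Z (adj Z)))"
  have q0: "q \<ge> 0" unfolding q_def using state_positive_Re[OF st, of "adj Z"] by simp
  have q: "\<psi> (mm Z (adj Z)) = of_real q"
    using state_positive_Im[OF st, of "adj Z"] unfolding q_def by (simp add: complex_eq_iff)
  have hz: "\<psi> (mm (adj Y) (adj Z)) = cnj c"
    unfolding c_def using state_adj[OF st, of "mm Z Y"] by (simp add: adj_mm)
  define s :: real where "s = 1 / (q + 1)"
  have s0: "s > 0" and sq: "s * q < 1" unfolding s_def using q0 by (simp_all add: field_simps)
  define t where "t = - (of_real s * c)"
  have "\<psi> (mm (adj (\<lambda>i j. Y i j + t * adj Z i j)) (\<lambda>i j. Y i j + t * adj Z i j)) =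
     t * cnj c + cnj t * c + cnj t * t * of_real q"
    unfolding mm_adj_self_lincomb linear_functional_lincomb4[OF lf] by (simp add: Y hz c_def q)
  then have "Re (t * cnj c + cnj t * c + cnj t * t * of_real q) \<ge> 0"
    using state_positive_Re[OF st, of "\<lambda>i j. Y i j + t * adj Z i j"] by simp
  then have "s * ((Re c)\<^sup>2 + (Im c)\<^sup>2) * (s * q - 2) \<ge> 0"
    unfolding t_def by (simp add: algebra_simps power2_eq_square)
  then have "(Re c)\<^sup>2 + (Im c)\<^sup>2 \<le> 0"
    using s0 sq by (auto simp: zero_le_mult_iff mult_le_0_iff)
  then have "c = 0"
    by (simp add: complex_eq_iff sum_power2_le_zero_iff)
  then show ?thesis unfolding c_def .
qed

lemma state_null_mm_left:
  assumes st: "is_state \<psi>" and Y: "\<psi> (mm (adj Y) Y) = 0"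
  shows "\<psi> (mm (adj Y) Z) = 0"
  using state_adj[OF st, of "mm (adj Z) Y"] state_null_mm_right[OF st Y, of "adj Z"]
  by (simp add: adj_mm)

section \<open>The slice map of a unitary\<close>

text \<open>\<open>row_op W w b = (id \<otimes> \<langle>\<delta>\<^sub>b|) W (id \<otimes> |w\<rangle>)\<close> is an operator on the first leg, and
  \<open>L(\<psi>) w\<close> has \<open>b\<close>-th coordinate \<open>\<psi> (row_op W w b)\<close>.\<close>

definition block :: "('i::finite \<times> 'i) hop \<Rightarrow> 'i \<Rightarrow> 'i \<Rightarrow> 'i hop" where
  "block W p q = (\<lambda>s t. W (s, p) (t, q))"

definition row_op :: "('i::finite \<times> 'i) hop \<Rightarrow> 'i hvec \<Rightarrow> 'i \<Rightarrow> 'i hop" where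
  "row_op W w b = (\<lambda>a a'. \<Sum>b'\<in>UNIV. W (a, b) (a', b') * w b')"

lemma row_op_block: "row_op W v b = (\<lambda>i j. \<Sum>w\<in>UNIV. v w * block W b w i j)"
  unfolding row_op_def block_def by (simp add: mult.commute)

lemma mv_Lslice_block: "mv (Lslice W \<psi>) x a = (\<Sum>y\<in>UNIV. \<psi> (block W a y) * x y)"
  by (simp add: mv_def Lslice_def block_def)

lemma mv_Lslice_row_op:
  assumes lf: "linear_functional \<psi>"
  shows "mv (Lslice W \<psi>) w b = \<psi> (row_op W w b)"
  by (simp add: row_op_block mv_Lslice_block linear_functional_sum[OF lf]
      linear_functional_scale[OF lf] mult.commute)

lemma mv_tens_row_op: "mv W (tens \<xi> \<eta>) (a, b) = mv (row_op W \<eta> b) \<xi> a"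
  unfolding mv_def tens_def row_op_def by (simp add: sum_UNIV_prod sum_distrib_left mult_ac)

lemma sum_mm_adj_row_op:
  assumes u: "unitary_op W"
  shows "(\<lambda>i j. \<Sum>b\<in>UNIV. mm (adj (row_op W w b)) (row_op W w' b) i j) = (\<lambda>i j. cinner w' w * idop i j)"
proof (intro ext)
  fix i j
  have "(\<Sum>b\<in>UNIV. mm (adj (row_op W w b)) (row_op W w' b) i j) =
        (\<Sum>b\<in>UNIV. \<Sum>a\<in>UNIV. adj (row_op W w b) i a * row_op W w' b a j)"
    unfolding mm_def ..
  also have "\<dots> = (\<Sum>a\<in>UNIV. \<Sum>b\<in>UNIV. adj (row_op W w b) i a * row_op W w' b a j)"
    by (rule sum.swap)
  also have "\<dots> = cinner (mv W (tens (basis_vec j) w')) (mv W (tens (basis_vec i) w))"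
    unfolding cinner_def by (simp add: sum_UNIV_prod mv_tens_row_op mv_basis_vec adj_def mult.commute)
  also have "\<dots> = cinner w' w * idop i j"
    unfolding unitary_cinner[OF u] cinner_tens cinner_basis_vec idop_def by auto
  finally show "(\<Sum>b\<in>UNIV. mm (adj (row_op W w b)) (row_op W w' b) i j) = cinner w' w * idop i j" .
qed

definition row_defect :: "('i::finite \<times> 'i) hop \<Rightarrow> ('i hop \<Rightarrow> complex) \<Rightarrow> 'i hvec \<Rightarrow> 'i \<Rightarrow> 'i hop" where
  "row_defect W \<psi> w b = (\<lambda>i j. row_op W w b i j + (- mv (Lslice W \<psi>) w b) * idop i j)"

lemma sum_state_row_defect:
  assumes u: "unitary_op W" and st: "is_state \<psi>"
  shows "(\<Sum>b\<in>UNIV. \<psi> (mm (adj (row_defect W \<psi> w b)) (row_defect W \<psi> w b))) =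
    of_real (sqnorm w - sqnorm (mv (Lslice W \<psi>) w))"
proof -
  have lf: "linear_functional \<psi>" using st by (rule state_linear)
  define t where "t b = mv (Lslice W \<psi>) w b" for b
  have tX: "\<psi> (row_op W w b) = t b" for b
    unfolding t_def by (simp add: mv_Lslice_row_op[OF lf])
  have each: "\<psi> (mm (adj (row_defect W \<psi> w b)) (row_defect W \<psi> w b)) =
      \<psi> (mm (adj (row_op W w b)) (row_op W w b)) - cnj (t b) * t b" for b
    unfolding row_defect_def mm_adj_self_lincomb linear_functional_lincomb4[OF lf] t_def[symmetric]
    by (simp add: tX state_adj[OF st] state_idop[OF st])
  have "(\<Sum>b\<in>UNIV. \<psi> (mm (adj (row_op W w b)) (row_op W w b))) =
      \<psi> (\<lambda>i j. \<Sum>b\<in>UNIV. mm (adj (row_op W w b)) (row_op W w b) i j)"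
    by (simp add: linear_functional_sum[OF lf])
  also have "\<dots> = cinner w w"
    by (simp add: sum_mm_adj_row_op[OF u] linear_functional_scale[OF lf] state_idop[OF st])
  finally have "(\<Sum>b\<in>UNIV. \<psi> (mm (adj (row_op W w b)) (row_op W w b))) = of_real (sqnorm w)"
    by (simp add: cinner_self)
  moreover have "(\<Sum>b\<in>UNIV. cnj (t b) * t b) = of_real (sqnorm (mv (Lslice W \<psi>) w))"
    using cinner_self[of "mv (Lslice W \<psi>) w"] unfolding t_def cinner_def by (simp add: mult.commute)
  ultimately show ?thesis by (simp add: each sum_subtractf)
qed

lemma sum_state_mm_adj_self:
  fixes Y :: "'b::finite \<Rightarrow> 'i::finite hop"
  assumes st: "is_state \<psi>"
  shows "Re (\<Sum>b\<in>UNIV. \<psi> (mm (adj (Y b)) (Y b))) \<ge> 0"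
    and "(\<Sum>b\<in>UNIV. \<psi> (mm (adj (Y b)) (Y b))) = 0 \<Longrightarrow> \<psi> (mm (adj (Y b)) (Y b)) = 0"
proof -
  have Im0: "Im (\<psi> (mm (adj (Y b)) (Y b))) = 0" for b by (rule state_positive_Im[OF st])
  have Re0: "Re (\<psi> (mm (adj (Y b)) (Y b))) \<ge> 0" for b by (rule state_positive_Re[OF st])
  show "Re (\<Sum>b\<in>UNIV. \<psi> (mm (adj (Y b)) (Y b))) \<ge> 0"
    by (simp add: Re_sum sum_nonneg Re0)
  assume "(\<Sum>b\<in>UNIV. \<psi> (mm (adj (Y b)) (Y b))) = 0"
  then have "(\<Sum>b\<in>UNIV. Re (\<psi> (mm (adj (Y b)) (Y b)))) = 0" by (simp flip: Re_sum)
  then have "Re (\<psi> (mm (adj (Y b)) (Y b))) = 0" by (subst (asm) sum_nonneg_eq_0_iff) (auto simp: Re0)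
  then show "\<psi> (mm (adj (Y b)) (Y b)) = 0" using Im0 by (simp add: complex_eq_iff)
qed

lemma Lslice_contraction:
  assumes "unitary_op W" "is_state \<psi>"
  shows "sqnorm (mv (Lslice W \<psi>) w) \<le> sqnorm w"
  using sum_state_mm_adj_self(1)[OF assms(2), of "row_defect W \<psi> w"]
  by (simp add: sum_state_row_defect[OF assms])

lemma row_defect_null:
  assumes "unitary_op W" "is_state \<psi>" and "sqnorm (mv (Lslice W \<psi>) w) = sqnorm w"
  shows "\<psi> (mm (adj (row_defect W \<psi> w b)) (row_defect W \<psi> w b)) = 0"
  using sum_state_mm_adj_self(2)[OF assms(2), of "row_defect W \<psi> w"] assms(3)
  by (simp add: sum_state_row_defect[OF assms(1,2)])

text \<open>Isometry on \<open>w\<close> forces \<open>\<psi>(Y\<^sup>* Y) = 0\<close> for every defect \<open>Y = row_defect W \<psi> w b\<close>, and then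
  \<open>state_null_mm_right\<close> makes \<open>\<psi>\<close> multiplicative on \<open>row_op W w b\<close>.\<close>

lemma Lslice_multiplicative_domain:
  assumes u: "unitary_op W" and st: "is_state \<psi>" and iso: "sqnorm (mv (Lslice W \<psi>) w) = sqnorm w"
  shows "\<psi> (mm Z (row_op W w b)) = mv (Lslice W \<psi>) w b * \<psi> Z"
    and "\<psi> (mm (adj (row_op W w b)) Z) = cnj (mv (Lslice W \<psi>) w b) * \<psi> Z"
proof -
  have lf: "linear_functional \<psi>" using st by (rule state_linear)
  let ?t = "mv (Lslice W \<psi>) w b"
  have Y0: "\<psi> (mm (adj (row_defect W \<psi> w b)) (row_defect W \<psi> w b)) = 0"
    by (rule row_defect_null[OF u st iso])
  have X: "row_op W w b = (\<lambda>i j. row_defect W \<psi> w b i j + ?t * idop i j)"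
    unfolding row_defect_def by auto
  show "\<psi> (mm Z (row_op W w b)) = ?t * \<psi> Z"
    unfolding X mm_lincomb_right
    by (simp add: linear_functional_add[OF lf] linear_functional_scale[OF lf] state_null_mm_right[OF st Y0])
  show "\<psi> (mm (adj (row_op W w b)) Z) = cnj ?t * \<psi> Z"
    unfolding X adj_lincomb mm_lincomb_left
    by (simp add: linear_functional_add[OF lf] linear_functional_scale[OF lf] state_null_mm_left[OF st Y0])
qed

section \<open>Leg notation and the pentagon equation in coordinates\<close>

lemma sum_UNIV_triple:
  "(\<Sum>p\<in>(UNIV::('a::finite \<times> 'b::finite \<times> 'c::finite) set). f p) =
   (\<Sum>a\<in>UNIV. \<Sum>b\<in>UNIV. \<Sum>c\<in>UNIV. f (a, b, c))"
  by (simp add: sum_UNIV_prod)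

lemma hop3_eqI: "(\<And>a b c a' b' c'. F (a, b, c) (a', b', c') = G (a, b, c) (a', b', c')) \<Longrightarrow> F = G"
  by (intro ext) auto

lemma hop2_eqI: "(\<And>a b a' b'. F (a, b) (a', b') = G (a, b) (a', b')) \<Longrightarrow> F = G"
  by (intro ext) auto

lemma leg12_apply: "leg12 A (a, b, c) (a', b', c') = A (a, b) (a', b') * (if c = c' then 1 else 0)"
  by (simp add: leg12_def)

lemma leg23_apply: "leg23 A (a, b, c) (a', b', c') = A (b, c) (b', c') * (if a = a' then 1 else 0)"
  by (simp add: leg23_def)

lemma mm_leg12_left: "mm (leg12 A) M (a, b, c) q = (\<Sum>x\<in>UNIV. \<Sum>y\<in>UNIV. A (a, b) (x, y) * M (x, y, c) q)"
  by (simp add: mm_def leg12_def sum_UNIV_triple delta_simps sum_distrib_right mult_ac)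

lemma mm_leg13_left: "mm (leg13 A) M (a, b, c) q = (\<Sum>x\<in>UNIV. \<Sum>z\<in>UNIV. A (a, c) (x, z) * M (x, b, z) q)"
  by (simp add: mm_def leg13_def sum_UNIV_triple delta_simps sum_distrib_right mult_ac)

lemma mm_leg23_left: "mm (leg23 A) M (a, b, c) q = (\<Sum>y\<in>UNIV. \<Sum>z\<in>UNIV. A (b, c) (y, z) * M (a, y, z) q)"
  by (simp add: mm_def leg23_def sum_UNIV_triple delta_simps sum_distrib_right mult_ac)

lemma mm_adj_leg12_left:
  "mm (adj (leg12 A)) M (a, b, c) q = (\<Sum>x\<in>UNIV. \<Sum>y\<in>UNIV. cnj (A (x, y) (a, b)) * M (x, y, c) q)"
  by (simp add: mm_def adj_def leg12_def sum_UNIV_triple delta_simps sum_distrib_right mult_ac)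

lemma mm_adj_leg23_left:
  "mm (adj (leg23 A)) M (a, b, c) q = (\<Sum>y\<in>UNIV. \<Sum>z\<in>UNIV. cnj (A (y, z) (b, c)) * M (a, y, z) q)"
  by (simp add: mm_def adj_def leg23_def sum_UNIV_triple delta_simps sum_distrib_right mult_ac)

lemma leg12_mm: "mm (leg12 A) (leg12 B) = leg12 (mm A B)"
  by (rule hop3_eqI) (simp add: mm_leg12_left leg12_apply mm_def delta_simps sum_UNIV_prod sum_distrib_right mult_ac)

lemma leg23_mm: "mm (leg23 A) (leg23 B) = leg23 (mm A B)"
  by (rule hop3_eqI) (simp add: mm_leg23_left leg23_apply mm_def delta_simps sum_UNIV_prod sum_distrib_right mult_ac)

lemma leg12_unitary: "unitary_op W \<Longrightarrow> unitary_op (leg12 W)"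
proof -
  have "adj (leg12 W) = leg12 (adj W)" "leg12 idop = idop"
    by (rule hop3_eqI, simp add: adj_def leg12_def idop_def)+
  then show "unitary_op W \<Longrightarrow> unitary_op (leg12 W)"
    unfolding unitary_op_def by (simp add: leg12_mm)
qed

lemma leg23_unitary: "unitary_op W \<Longrightarrow> unitary_op (leg23 W)"
proof -
  have "adj (leg23 W) = leg23 (adj W)" "leg23 idop = idop"
    by (rule hop3_eqI, simp add: adj_def leg23_def idop_def)+
  then show "unitary_op W \<Longrightarrow> unitary_op (leg23 W)"
    unfolding unitary_op_def by (simp add: leg23_mm)
qed

lemma pentagon_iff_coords:
  "mm (mm (leg12 W) (leg13 W)) (leg23 W) = mm (leg23 W) (leg12 W) \<longleftrightarrow>
   (\<forall>u B C u' B' C'.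
      (\<Sum>x\<in>UNIV. \<Sum>y\<in>UNIV. \<Sum>w\<in>UNIV. W (u, B) (x, y) * W (x, C) (u', w) * W (y, w) (B', C')) =
      (\<Sum>y\<in>UNIV. W (B, C) (y, C') * W (u, y) (u', B')))"
proof -
  have l: "mm (mm (leg12 W) (leg13 W)) (leg23 W) (u, B, C) (u', B', C') =
     (\<Sum>x\<in>UNIV. \<Sum>y\<in>UNIV. \<Sum>w\<in>UNIV. W (u, B) (x, y) * W (x, C) (u', w) * W (y, w) (B', C'))"
    for u B C u' B' C'
    unfolding mm_assoc
    by (simp add: mm_leg12_left mm_leg13_left mm_leg23_left leg23_apply delta_simps sum_distrib_left mult_ac)
  have r: "mm (leg23 W) (leg12 W) (u, B, C) (u', B', C') = (\<Sum>y\<in>UNIV. W (B, C) (y, C') * W (u, y) (u', B'))"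
    for u B C u' B' C'
    by (simp add: mm_leg23_left leg12_apply delta_simps mult_ac)
  show ?thesis
    by (auto simp: l r intro!: hop3_eqI) (metis l r)
qed

lemma pentagon_coords:
  assumes "multiplicative_unitary W"
  shows "(\<Sum>x\<in>UNIV. \<Sum>y\<in>UNIV. \<Sum>w\<in>UNIV. W (u, B) (x, y) * W (x, C) (u', w) * W (y, w) (B', C')) =
         (\<Sum>y\<in>UNIV. W (B, C) (y, C') * W (u, y) (u', B'))"
  using assms unfolding multiplicative_unitary_def pentagon_iff_coords by blast

text \<open>The pentagon equation in the equivalent form \<open>V\<^sub>1\<^sub>3 V\<^sub>2\<^sub>3 = V\<^sub>1\<^sub>2\<^sup>* V\<^sub>2\<^sub>3 V\<^sub>1\<^sub>2\<close>.\<close>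

lemma pentagon_coords_adj12:
  assumes "multiplicative_unitary W"
  shows "(\<Sum>w\<in>UNIV. W (a, c) (a', w) * W (b, w) (b', c')) =
         (\<Sum>x\<in>UNIV. \<Sum>y\<in>UNIV. \<Sum>y'\<in>UNIV. cnj (W (x, y) (a, b)) * W (y, c) (y', c') * W (x, y') (a', b'))"
proof -
  have u: "unitary_op (leg12 W)"
    using assms unfolding multiplicative_unitary_def by (simp add: leg12_unitary)
  have p: "mm (mm (leg12 W) (leg13 W)) (leg23 W) = mm (leg23 W) (leg12 W)"
    using assms unfolding multiplicative_unitary_def by simp
  have "mm (leg13 W) (leg23 W) = mm (mm (adj (leg12 W)) (leg12 W)) (mm (leg13 W) (leg23 W))"
    using u unfolding unitary_op_def by simp
  also have "\<dots> = mm (adj (leg12 W)) (mm (leg23 W) (leg12 W))"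
    by (simp add: mm_assoc flip: p)
  finally have "mm (leg13 W) (leg23 W) (a, b, c) (a', b', c') =
      mm (adj (leg12 W)) (mm (leg23 W) (leg12 W)) (a, b, c) (a', b', c')"
    by simp
  then show ?thesis
    by (simp add: mm_adj_leg12_left mm_leg13_left mm_leg23_left leg23_apply leg12_apply delta_simps
        sum_distrib_left mult_ac)
qed

text \<open>The pentagon equation in the equivalent form \<open>V\<^sub>1\<^sub>2 V\<^sub>2\<^sub>3\<^sup>* = V\<^sub>2\<^sub>3\<^sup>* V\<^sub>1\<^sub>2 V\<^sub>1\<^sub>3\<close>.\<close>

lemma pentagon_coords_adj23:
  assumes "multiplicative_unitary W"
  shows "(\<Sum>y\<in>UNIV. cnj (W (b', c') (y, c)) * W (u, b) (u', y)) =
         (\<Sum>y\<in>UNIV. \<Sum>z\<in>UNIV. \<Sum>x\<in>UNIV. cnj (W (y, z) (b, c)) * W (u, y) (x, b') * W (x, z) (u', c'))"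
proof -
  have u: "unitary_op (leg23 W)"
    using assms unfolding multiplicative_unitary_def by (simp add: leg23_unitary)
  have p: "mm (mm (leg12 W) (leg13 W)) (leg23 W) = mm (leg23 W) (leg12 W)"
    using assms unfolding multiplicative_unitary_def by simp
  have "mm (leg12 W) (adj (leg23 W)) = mm (mm (adj (leg23 W)) (leg23 W)) (mm (leg12 W) (adj (leg23 W)))"
    using u unfolding unitary_op_def by simp
  also have "\<dots> = mm (adj (leg23 W)) (mm (mm (leg23 W) (leg12 W)) (adj (leg23 W)))"
    by (simp add: mm_assoc)
  also have "\<dots> = mm (adj (leg23 W)) (mm (mm (mm (leg12 W) (leg13 W)) (leg23 W)) (adj (leg23 W)))"
    by (simp only: p)
  also have "\<dots> = mm (adj (leg23 W)) (mm (leg12 W) (leg13 W))"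
    using u unfolding unitary_op_def by (simp add: mm_assoc)
  finally have e: "mm (leg12 W) (adj (leg23 W)) (u, b, c) (u', b', c') =
      mm (adj (leg23 W)) (mm (leg12 W) (leg13 W)) (u, b, c) (u', b', c')"
    by simp
  have "mm (leg12 W) (adj (leg23 W)) (u, b, c) (u', b', c') =
      (\<Sum>y\<in>UNIV. cnj (W (b', c') (y, c)) * W (u, b) (u', y))"
    by (simp add: mm_leg12_left adj_def leg23_apply delta_simps mult_ac)
  with e show ?thesis
    by (simp add: mm_adj_leg23_left mm_leg12_left mm_leg13_left leg13_def delta_simps
        sum_distrib_left mult_ac)
qed

section \<open>Unimodular eigenvalues form a finite group\<close>

definition to_vec :: "'i::finite hvec \<Rightarrow> complex ^ 'i" where
  "to_vec x = (\<chi> i. x i)"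

lemma to_vec_eq_iff: "to_vec x = to_vec y \<longleftrightarrow> x = y"
  unfolding to_vec_def by (auto simp: vec_eq_iff)

lemma to_vec_eq_0_iff: "to_vec x = 0 \<longleftrightarrow> x = (\<lambda>_. 0)"
  unfolding to_vec_def by (auto simp: vec_eq_iff)

lemma inner_to_vec: "inner (to_vec x) (to_vec y) = Re (cinner x y)"
  unfolding to_vec_def cinner_def inner_vec_def by (simp add: inner_complex_def)

lemma finite_orthogonal_family:
  fixes v :: "'a \<Rightarrow> 'i::finite hvec"
  assumes nz: "\<And>z. z \<in> S \<Longrightarrow> v z \<noteq> (\<lambda>_. 0)"
    and orth: "\<And>z z'. z \<in> S \<Longrightarrow> z' \<in> S \<Longrightarrow> z \<noteq> z' \<Longrightarrow> cinner (v z) (v z') = 0"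
  shows "finite S"
proof -
  have inj: "inj_on (\<lambda>z. to_vec (v z)) S"
  proof (rule inj_onI, rule ccontr)
    fix z z' assume zz: "z \<in> S" "z' \<in> S" "to_vec (v z) = to_vec (v z')" "z \<noteq> z'"
    then have "cinner (v z) (v z) = 0" using orth[of z z'] by (simp add: to_vec_eq_iff)
    then show False using nz[OF zz(1)] by (simp add: cinner_self sqnorm_eq_0_iff)
  qed
  have "pairwise orthogonal ((\<lambda>z. to_vec (v z)) ` S)"
    unfolding pairwise_def orthogonal_def
  proof clarify
    fix z z' assume "z \<in> S" "z' \<in> S" "to_vec (v z) \<noteq> to_vec (v z')"
    then have "z \<noteq> z'" by auto
    with orth[of z z'] \<open>z \<in> S\<close> \<open>z' \<in> S\<close> show "inner (to_vec (v z)) (to_vec (v z')) = 0"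
      by (simp add: inner_to_vec)
  qed
  moreover have "0 \<notin> (\<lambda>z. to_vec (v z)) ` S"
    using nz by (auto simp: to_vec_eq_0_iff)
  ultimately have "finite ((\<lambda>z. to_vec (v z)) ` S)"
    using independent_bound pairwise_orthogonal_independent by blast
  then show ?thesis using finite_imageD[OF _ inj] by blast
qed

lemma power_mult_closed:
  fixes z :: "'a::monoid_mult"
  assumes "\<And>x y. x \<in> G \<Longrightarrow> y \<in> G \<Longrightarrow> x * y \<in> G" and "z \<in> G"
  shows "z ^ Suc k \<in> G"
proof (induction k)
  case (Suc k)
  then show ?case using assms(1)[OF assms(2)] by simp
qed (simp add: assms(2))

lemma mult_closed_finite_root_of_unity:
  fixes z :: "'a::idom"
  assumes fin: "finite G" and cl: "\<And>x y. x \<in> G \<Longrightarrow> y \<in> G \<Longrightarrow> x * y \<in> G"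
    and zG: "z \<in> G" and z0: "z \<noteq> 0"
  shows "\<exists>n>0. z ^ n = 1"
proof -
  have "range (\<lambda>k. z ^ Suc k) \<subseteq> G" using power_mult_closed[OF cl zG] by auto
  then have "\<not> inj (\<lambda>k. z ^ Suc k)"
    using fin finite_subset finite_imageD[of "\<lambda>k. z ^ Suc k" UNIV] by auto
  then obtain i j where ij: "i < j" "z ^ Suc i = z ^ Suc j"
    unfolding inj_def by (metis linorder_neqE_nat)
  have "z ^ Suc i * z ^ (j - i) = z ^ Suc j" using ij(1) by (simp flip: power_add)
  then have "z ^ (j - i) = 1" using ij(2) z0 by simp
  then show ?thesis using ij(1) by (intro exI[of _ "j - i"]) simp
qed

lemma finite_subgroup_U1I:
  assumes fin: "finite G" and sub: "G \<subseteq> {z. cmod z = 1}" and one: "1 \<in> G"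
    and cl: "\<And>x y. x \<in> G \<Longrightarrow> y \<in> G \<Longrightarrow> x * y \<in> G"
  shows "finite_subgroup_U1 G"
proof -
  have "inverse z \<in> G" if zG: "z \<in> G" for z
  proof -
    have z0: "z \<noteq> 0" using sub zG by auto
    obtain n where n: "n > 0" "z ^ n = 1"
      using mult_closed_finite_root_of_unity[OF fin cl zG z0] by blast
    have "z * z ^ (n - 1) = 1" using n by (simp flip: power_Suc)
    then have inv: "inverse z = z ^ (n - 1)" using z0 by (simp add: field_simps)
    show ?thesis
    proof (cases "n - 1")
      case 0
      then show ?thesis using inv one by simp
    next
      case (Suc k)
      then show ?thesis using inv power_mult_closed[OF cl zG, of k] by simp
    qed
  qed
  then show ?thesis
    unfolding finite_subgroup_U1_def using fin sub one cl by blast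
qed

lemma finite_subgroup_U1_root_of_unity:
  assumes "finite_subgroup_U1 G" "z \<in> G"
  shows "\<exists>n::nat. n > 0 \<and> z ^ n = 1"
proof -
  have "z \<noteq> 0" using assms unfolding finite_subgroup_U1_def by auto
  then show ?thesis
    using assms mult_closed_finite_root_of_unity[of G z] unfolding finite_subgroup_U1_def by auto
qed

lemma finite_subgroup_U1_cnj:
  assumes "finite_subgroup_U1 G"
  shows "finite_subgroup_U1 (cnj ` G)"
  using assms unfolding finite_subgroup_U1_def
  by (auto simp flip: complex_cnj_mult complex_cnj_inverse intro!: imageI)

lemma finite_subgroup_U1_common_exponent:
  assumes fin: "finite_subgroup_U1 G"
  shows "\<exists>d::nat. d > 0 \<and> (\<forall>z\<in>G. z ^ d = 1)"
proof -
  define n :: "complex \<Rightarrow> nat" where "n z = (SOME n::nat. n > 0 \<and> z ^ n = 1)" for z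
  have nz: "n z > 0 \<and> z ^ n z = 1" if "z \<in> G" for z
    unfolding n_def using finite_subgroup_U1_root_of_unity[OF fin that] by (rule someI_ex)
  have finG: "finite G" using fin unfolding finite_subgroup_U1_def by blast
  define d where "d = (\<Prod>z\<in>G. n z)"
  have "z ^ d = 1" if "z \<in> G" for z
  proof -
    have "n z dvd d" unfolding d_def using finG that by (rule dvd_prod_eqI) simp
    then show ?thesis using nz[OF that] by (auto simp: power_mult elim!: dvdE)
  qed
  moreover have "d > 0" unfolding d_def using nz finG by (simp add: prod_pos)
  ultimately show ?thesis by blast
qed

definition cofixed_vec :: "('i::finite \<times> 'i) hop \<Rightarrow> 'i hvec \<Rightarrow> bool" where
  "cofixed_vec V h \<longleftrightarrow> (\<forall>\<xi>. mv V (tens \<xi> h) = tens \<xi> h)"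

lemma row_op_cofixed:
  assumes "cofixed_vec W h"
  shows "row_op W h b = (\<lambda>i j. h b * idop i j)"
proof (intro ext)
  fix i j
  have "row_op W h b i j = mv W (tens (basis_vec j) h) (i, b)"
    by (simp add: mv_tens_row_op mv_basis_vec)
  also have "\<dots> = h b * idop i j"
    using assms by (simp add: cofixed_vec_def tens_def basis_vec_def idop_def)
  finally show "row_op W h b i j = h b * idop i j" .
qed

locale mu_state =
  fixes W :: "('i::finite \<times> 'i) hop" and \<psi> :: "'i hop \<Rightarrow> complex"
  assumes mu: "multiplicative_unitary W" and state: "is_state \<psi>"
begin

abbreviation "T \<equiv> Lslice W \<psi>"

lemma W_unitary: "unitary_op W"
  using mu unfolding multiplicative_unitary_def by blast

lemma psi_linear: "linear_functional \<psi>"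
  using state by (rule state_linear)

lemma mv_T: "mv T w b = \<psi> (row_op W w b)"
  by (rule mv_Lslice_row_op[OF psi_linear])

lemma contraction: "sqnorm (mv T w) \<le> sqnorm w"
  by (rule Lslice_contraction[OF W_unitary state])

lemma multiplicative_domain:
  assumes "sqnorm (mv T w) = sqnorm w"
  shows "\<psi> (mm Z (row_op W w b)) = mv T w b * \<psi> Z"
    and "\<psi> (mm (adj (row_op W w b)) Z) = cnj (mv T w b) * \<psi> Z"
  by (rule Lslice_multiplicative_domain[OF W_unitary state assms])+

lemma isometric_cinner:
  assumes iso: "sqnorm (mv T w) = sqnorm w"
  shows "cinner (mv T y) (mv T w) = cinner y w"
proof -
  have "cinner (mv T y) (mv T w) = (\<Sum>b\<in>UNIV. \<psi> (mm (adj (row_op W w b)) (row_op W y b)))"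
    unfolding cinner_def using multiplicative_domain(2)[OF iso] by (simp add: mv_T mult.commute)
  also have "\<dots> = \<psi> (\<lambda>i j. \<Sum>b\<in>UNIV. mm (adj (row_op W w b)) (row_op W y b) i j)"
    by (simp add: linear_functional_sum[OF psi_linear])
  also have "\<dots> = cinner y w"
    by (simp add: sum_mm_adj_row_op[OF W_unitary] linear_functional_scale[OF psi_linear] state_idop[OF state])
  finally show ?thesis .
qed

lemma unimodular_eigen_isometric:
  assumes "mv T w = (\<lambda>i. z * w i)" "cmod z = 1"
  shows "sqnorm (mv T w) = sqnorm w"
  using assms by (simp add: sqnorm_scale)

lemma unimodular_eigen_orthogonal:
  assumes e1: "mv T w = (\<lambda>i. z * w i)" "cmod z = 1"
    and e2: "mv T w' = (\<lambda>i. z' * w' i)" "cmod z' = 1" and ne: "z \<noteq> z'"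
  shows "cinner w w' = 0"
proof -
  have "z * cnj z' * cinner w w' = cinner w w'"
    using isometric_cinner[OF unimodular_eigen_isometric[OF e2], of w] e1 e2
    by (simp add: cinner_scale_left cinner_scale_right mult_ac)
  moreover have "z * cnj z' \<noteq> 1"
  proof
    assume "z * cnj z' = 1"
    then have "z * (cnj z' * z') = z'" by (metis mult.assoc mult_1)
    then show False using ne e2(2) by (simp add: complex_norm_square[symmetric] mult.commute)
  qed
  ultimately show ?thesis by (metis mult_cancel_right1 mult.commute)
qed

lemma finite_unimodular_eigenvalues: "finite (unimodular_eigenvalues T)"
proof -
  let ?G = "unimodular_eigenvalues T"
  define v where "v z = (SOME x. x \<noteq> (\<lambda>_. 0) \<and> mv T x = (\<lambda>i. z * x i))" for z
  have v: "v z \<noteq> (\<lambda>_. 0) \<and> mv T (v z) = (\<lambda>i. z * v z i) \<and> cmod z = 1" if "z \<in> ?G" for z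
  proof -
    have ex: "\<exists>x. x \<noteq> (\<lambda>_. 0) \<and> mv T x = (\<lambda>i. z * x i)" and "cmod z = 1"
      using that unfolding unimodular_eigenvalues_def by auto
    then show ?thesis unfolding v_def using someI_ex[OF ex] by blast
  qed
  show ?thesis
  proof (rule finite_orthogonal_family[of ?G v])
    fix z z' assume "z \<in> ?G" "z' \<in> ?G" "z \<noteq> z'"
    then show "cinner (v z) (v z') = 0"
      using v[of z] v[of z'] unimodular_eigen_orthogonal[of "v z" z "v z'" z'] by blast
  qed (use v in blast)
qed

lemma cofixed_eigenvector:
  assumes "cofixed_vec W h"
  shows "mv T h = h"
  by (rule ext) (simp add: mv_T row_op_cofixed[OF assms] linear_functional_scale[OF psi_linear]
      state_idop[OF state])

lemma psi_block_pentagon_adj23: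
  "(\<Sum>b'\<in>UNIV. cnj (W (c', a') (b', a0)) * \<psi> (block W b b')) =
   (\<Sum>y\<in>UNIV. \<Sum>z\<in>UNIV. cnj (W (y, z) (b, a0)) * \<psi> (mm (block W y c') (block W z a')))"
proof -
  have "(\<Sum>b'\<in>UNIV. cnj (W (c', a') (b', a0)) * \<psi> (block W b b')) =
      \<psi> (\<lambda>u u'. \<Sum>b'\<in>UNIV. cnj (W (c', a') (b', a0)) * W (u, b) (u', b'))"
    by (simp add: linear_functional_sum[OF psi_linear] linear_functional_scale[OF psi_linear] block_def)
  also have "\<dots> = \<psi> (\<lambda>u u'. \<Sum>y\<in>UNIV. \<Sum>z\<in>UNIV.
      cnj (W (y, z) (b, a0)) * mm (block W y c') (block W z a') u u')"
    using pentagon_coords_adj23[OF mu, of c' a' a0 _ b]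
    by (simp add: mm_def block_def sum_distrib_left mult_ac)
  finally show ?thesis
    by (simp add: linear_functional_sum2[OF psi_linear] linear_functional_scale[OF psi_linear])
qed

lemma mm_row_op:
  "mm (row_op W v y) (row_op W v' z) =
   (\<lambda>u u'. \<Sum>c\<in>UNIV. \<Sum>a\<in>UNIV. (v c * v' a) * mm (block W y c) (block W z a) u u')"
proof (intro ext)
  fix u u'
  have "mm (row_op W v y) (row_op W v' z) u u' =
      (\<Sum>x\<in>UNIV. \<Sum>c\<in>UNIV. \<Sum>a\<in>UNIV. W (u, y) (x, c) * v c * (W (x, z) (u', a) * v' a))"
    unfolding mm_def row_op_def by (simp add: sum_product)
  also have "\<dots> = (\<Sum>c\<in>UNIV. \<Sum>a\<in>UNIV. \<Sum>x\<in>UNIV. W (u, y) (x, c) * v c * (W (x, z) (u', a) * v' a))"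
    by (rule sum_rotate3)
  finally show "mm (row_op W v y) (row_op W v' z) u u' =
      (\<Sum>c\<in>UNIV. \<Sum>a\<in>UNIV. (v c * v' a) * mm (block W y c) (block W z a) u u')"
    unfolding mm_def block_def by (simp add: sum_distrib_left mult_ac)
qed

text \<open>Columns of \<open>W\<^sup>*(\<eta>\<^sub>2 \<otimes> \<eta>\<^sub>1)\<close> multiply eigenvalues; the unimodularity of \<open>z\<^sub>1\<close> puts
  \<open>row_op W \<eta>\<^sub>1 z\<close> in the multiplicative domain of \<open>\<psi>\<close>.\<close>

lemma eigenvector_adj_tens_column:
  fixes a0 :: 'i
  assumes e1: "mv T \<eta>1 = (\<lambda>i. z1 * \<eta>1 i)" "cmod z1 = 1" and e2: "mv T \<eta>2 = (\<lambda>i. z2 * \<eta>2 i)"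
  defines "\<zeta> \<equiv> \<lambda>c. mv (adj W) (tens \<eta>2 \<eta>1) (c, a0)"
  shows "mv T \<zeta> = (\<lambda>i. z1 * z2 * \<zeta> i)"
proof
  fix b
  have \<zeta>: "\<zeta> b' = (\<Sum>c'\<in>UNIV. \<Sum>a'\<in>UNIV. cnj (W (c', a') (b', a0)) * (\<eta>2 c' * \<eta>1 a'))" for b'
    unfolding \<zeta>_def mv_def adj_def tens_def by (simp add: sum_UNIV_prod)
  have md: "\<psi> (mm Z (row_op W \<eta>1 z)) = z1 * \<eta>1 z * \<psi> Z" for Z z
    using multiplicative_domain(1)[OF unimodular_eigen_isometric[OF e1], of Z z] e1(1) by simp
  have "mv T \<zeta> b = (\<Sum>b'\<in>UNIV. \<Sum>c'\<in>UNIV. \<Sum>a'\<in>UNIV.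
      (\<eta>2 c' * \<eta>1 a') * (cnj (W (c', a') (b', a0)) * \<psi> (block W b b')))"
    unfolding mv_Lslice_block \<zeta> by (simp add: sum_distrib_left mult_ac)
  also have "\<dots> = (\<Sum>c'\<in>UNIV. \<Sum>a'\<in>UNIV. \<Sum>b'\<in>UNIV.
      (\<eta>2 c' * \<eta>1 a') * (cnj (W (c', a') (b', a0)) * \<psi> (block W b b')))"
    by (rule sum_rotate3)
  also have "\<dots> = (\<Sum>c'\<in>UNIV. \<Sum>a'\<in>UNIV. (\<eta>2 c' * \<eta>1 a') *
      (\<Sum>b'\<in>UNIV. cnj (W (c', a') (b', a0)) * \<psi> (block W b b')))"
    by (simp add: sum_distrib_left)
  also have "\<dots> = (\<Sum>c'\<in>UNIV. \<Sum>a'\<in>UNIV. \<Sum>y\<in>UNIV. \<Sum>z\<in>UNIV.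
      cnj (W (y, z) (b, a0)) * ((\<eta>2 c' * \<eta>1 a') * \<psi> (mm (block W y c') (block W z a'))))"
    by (simp only: psi_block_pentagon_adj23 sum_distrib_left) (simp add: mult_ac)
  also have "\<dots> = (\<Sum>y\<in>UNIV. \<Sum>z\<in>UNIV. cnj (W (y, z) (b, a0)) * \<psi> (mm (row_op W \<eta>2 y) (row_op W \<eta>1 z)))"
    by (subst sum_swap_pairs)
      (simp add: mm_row_op linear_functional_sum2[OF psi_linear] linear_functional_scale[OF psi_linear]
        sum_distrib_left)
  also have "\<dots> = (\<Sum>y\<in>UNIV. \<Sum>z\<in>UNIV. cnj (W (y, z) (b, a0)) * (z1 * \<eta>1 z * (z2 * \<eta>2 y)))"
    by (simp add: md mv_T[symmetric] e2)
  also have "\<dots> = z1 * z2 * \<zeta> b"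
    unfolding \<zeta>_def mv_def adj_def tens_def by (simp add: sum_UNIV_prod sum_distrib_left mult_ac)
  finally show "mv T \<zeta> b = z1 * z2 * \<zeta> b" .
qed

lemma unimodular_eigenvalues_mult:
  assumes "z1 \<in> unimodular_eigenvalues T" "z2 \<in> unimodular_eigenvalues T"
  shows "z1 * z2 \<in> unimodular_eigenvalues T"
proof -
  obtain \<eta>1 where e1: "\<eta>1 \<noteq> (\<lambda>_. 0)" "mv T \<eta>1 = (\<lambda>i. z1 * \<eta>1 i)" "cmod z1 = 1"
    using assms(1) unfolding unimodular_eigenvalues_def by blast
  obtain \<eta>2 where e2: "\<eta>2 \<noteq> (\<lambda>_. 0)" "mv T \<eta>2 = (\<lambda>i. z2 * \<eta>2 i)" "cmod z2 = 1"
    using assms(2) unfolding unimodular_eigenvalues_def by blast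
  have "tens \<eta>2 \<eta>1 \<noteq> (\<lambda>_. 0)" using e1(1) e2(1) by (simp add: tens_eq_0_iff)
  then have "mv (adj W) (tens \<eta>2 \<eta>1) \<noteq> (\<lambda>_. 0)"
    using unitary_mv_inverse(1)[OF W_unitary, of "tens \<eta>2 \<eta>1"] by auto
  then obtain c0 a0 where "mv (adj W) (tens \<eta>2 \<eta>1) (c0, a0) \<noteq> 0"
    by (metis (full_types) ext surj_pair)
  then have "(\<lambda>c. mv (adj W) (tens \<eta>2 \<eta>1) (c, a0)) \<noteq> (\<lambda>_. 0)" by metis
  with eigenvector_adj_tens_column[OF e1(2,3) e2(2), of a0] e1(3) e2(3) show ?thesis
    unfolding unimodular_eigenvalues_def by (auto simp: norm_mult)
qed

lemma finite_subgroup_unimodular_eigenvalues: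
  assumes "cofixed_vec W h" "h \<noteq> (\<lambda>_. 0)"
  shows "finite_subgroup_U1 (unimodular_eigenvalues T)"
proof (rule finite_subgroup_U1I[OF finite_unimodular_eigenvalues])
  show "1 \<in> unimodular_eigenvalues T"
    using cofixed_eigenvector[OF assms(1)] assms(2) unfolding unimodular_eigenvalues_def by auto
  show "unimodular_eigenvalues T \<subseteq> {z. cmod z = 1}"
    unfolding unimodular_eigenvalues_def by auto
qed (rule unimodular_eigenvalues_mult)

end

section \<open>Periodic vectors and unimodular eigenvectors\<close>

primrec mpow :: "'i::finite hop \<Rightarrow> nat \<Rightarrow> 'i hop" where
  "mpow A 0 = idop"
| "mpow A (Suc k) = mm A (mpow A k)"

lemma mv_mpow_Suc: "mv (mpow A (Suc k)) x = mv A (mv (mpow A k) x)"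
  by (simp add: mv_mm)

lemma mpow_add: "mpow A (k + m) = mm (mpow A k) (mpow A m)"
  by (induction k) (simp_all add: mm_assoc)

lemma mv_mpow_add: "mv (mpow A (k + m)) x = mv (mpow A k) (mv (mpow A m) x)"
  by (simp add: mpow_add mv_mm)

lemma mv_mpow_Suc_right: "mv (mpow A (Suc k)) x = mv (mpow A k) (mv A x)"
  using mv_mpow_add[of A k 1 x] by simp

lemma mv_mpow_eigen:
  assumes "mv A x = (\<lambda>i. z * x i)"
  shows "mv (mpow A k) x = (\<lambda>i. z ^ k * x i)"
proof (induction k)
  case (Suc k)
  have "mv (mpow A (Suc k)) x = (\<lambda>i. z ^ k * (z * x i))"
    by (simp only: mv_mpow_Suc Suc mv_scale assms)
  then show ?case by (simp add: mult_ac)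
qed simp

lemma mv_mpow_periodic:
  assumes "mv (mpow A d) \<eta> = \<eta>"
  shows "mv (mpow A d) (mv (mpow A k) \<eta>) = mv (mpow A k) \<eta>" "mv (mpow A (d * n)) \<eta> = \<eta>"
proof -
  show "mv (mpow A d) (mv (mpow A k) \<eta>) = mv (mpow A k) \<eta>"
    using assms by (metis add.commute mv_mpow_add)
  show "mv (mpow A (d * n)) \<eta> = \<eta>"
    by (induction n) (simp_all add: assms mv_mpow_add)
qed

lemma cspan_zero: "(\<lambda>_. 0) \<in> cspan E"
  unfolding cspan_def by (rule CollectI, rule exI[of _ "{}"]) auto

lemma cspan_base: "x \<in> E \<Longrightarrow> x \<in> cspan E"
  unfolding cspan_def by (rule CollectI, rule exI[of _ "{x}"], rule exI[of _ "\<lambda>_. 1"]) auto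

lemma cspan_scale:
  assumes "x \<in> cspan E"
  shows "(\<lambda>i. a * x i) \<in> cspan E"
proof -
  obtain S c where S: "finite S" "S \<subseteq> E" "x = (\<lambda>i. \<Sum>v\<in>S. c v * v i)"
    using assms unfolding cspan_def by blast
  have "(\<lambda>i. a * x i) = (\<lambda>i. \<Sum>v\<in>S. (a * c v) * v i)"
    unfolding S(3) by (simp add: sum_distrib_left mult.assoc)
  then show ?thesis
    unfolding cspan_def by (intro CollectI exI[of _ S] exI[of _ "\<lambda>v. a * c v"]) (simp add: S(1,2))
qed

lemma cspan_add:
  assumes "x \<in> cspan E" "y \<in> cspan E"
  shows "(\<lambda>i. x i + y i) \<in> cspan E"
proof -
  obtain S c where S: "finite S" "S \<subseteq> E" "x = (\<lambda>i. \<Sum>v\<in>S. c v * v i)"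
    using assms(1) unfolding cspan_def by blast
  obtain S' c' where S': "finite S'" "S' \<subseteq> E" "y = (\<lambda>i. \<Sum>v\<in>S'. c' v * v i)"
    using assms(2) unfolding cspan_def by blast
  define C where "C v = (if v \<in> S then c v else 0) + (if v \<in> S' then c' v else 0)" for v
  have "(\<Sum>v\<in>S. c v * v i) = (\<Sum>v\<in>S \<union> S'. (if v \<in> S then c v else 0) * v i)" for i
    by (rule sum.mono_neutral_cong_left) (use S S' in auto)
  moreover have "(\<Sum>v\<in>S'. c' v * v i) = (\<Sum>v\<in>S \<union> S'. (if v \<in> S' then c' v else 0) * v i)" for i
    by (rule sum.mono_neutral_cong_left) (use S S' in auto)
  ultimately have "(\<lambda>i. x i + y i) = (\<lambda>i. \<Sum>v\<in>S \<union> S'. C v * v i)"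
    unfolding S(3) S'(3) C_def by (simp add: distrib_right sum.distrib)
  then show ?thesis
    unfolding cspan_def by (intro CollectI exI[of _ "S \<union> S'"] exI[of _ C]) (simp add: S(1,2) S'(1,2))
qed

lemma cspan_sum:
  assumes "finite J" "\<And>j. j \<in> J \<Longrightarrow> f j \<in> cspan E"
  shows "(\<lambda>i. \<Sum>j\<in>J. f j i) \<in> cspan E"
  using assms
proof (induction J rule: finite_induct)
  case empty
  then show ?case by (simp add: cspan_zero)
next
  case (insert x F)
  then show ?case using cspan_add[of "f x" E "\<lambda>i. \<Sum>j\<in>F. f j i"] by simp
qed

lemma cis_root_of_unity:
  assumes d: "d > (0::nat)"
  defines "\<omega> \<equiv> cis (2 * pi / real d)"
  shows "\<omega> ^ d = 1" "cmod \<omega> = 1" "\<And>k. 0 < k \<Longrightarrow> k < d \<Longrightarrow> \<omega> ^ k \<noteq> 1"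
proof -
  show "\<omega> ^ d = 1" unfolding \<omega>_def Complex.DeMoivre using d by simp
  show "cmod \<omega> = 1" unfolding \<omega>_def by simp
  fix k :: nat assume k: "0 < k" "k < d"
  show "\<omega> ^ k \<noteq> 1"
  proof
    assume "\<omega> ^ k = 1"
    then have "cos (real k * (2 * pi / real d)) = 1"
      unfolding \<omega>_def Complex.DeMoivre by (metis cis.simps(1) one_complex.simps(1))
    then obtain n :: int where "real k * (2 * pi / real d) = real_of_int n * 2 * pi"
      using cos_one_2pi_int by blast
    then have "real k / real d = n" using d by (simp add: field_simps)
    moreover have "0 < real k / real d" "real k / real d < 1" using k by auto
    ultimately have "0 < n" "n < 1" by linarith+
    then show False by simp
  qed
qed

lemma sum_powers_cis_root_of_unity:
  assumes d: "d > (0::nat)" and k: "k < d"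
  defines "\<omega> \<equiv> cis (2 * pi / real d)"
  shows "(\<Sum>j<d. cnj (\<omega> ^ j) ^ k) = (if k = 0 then of_nat d else 0)"
proof -
  note R = cis_root_of_unity[OF d, folded \<omega>_def]
  have "(\<Sum>j<d. cnj (\<omega> ^ j) ^ k) = (\<Sum>j<d. cnj (\<omega> ^ k) ^ j)"
    by (simp add: power_mult[symmetric] mult.commute flip: complex_cnj_power)
  moreover have "(\<Sum>j<d. cnj (\<omega> ^ k) ^ j) = 0" if "k \<noteq> 0"
  proof -
    have "cnj (\<omega> ^ k) \<noteq> 1" using R(3)[of k] k that by (metis complex_cnj_one complex_cnj_cnj neq0_conv)
    moreover have "cnj (\<omega> ^ k) ^ d = 1"
      using R(1) by (simp add: power_mult[symmetric] mult.commute power_mult flip: complex_cnj_power)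
    ultimately show ?thesis by (simp add: sum_gp_strict)
  qed
  ultimately show ?thesis by simp
qed

text \<open>The discrete Fourier coefficients of the periodic orbit \<open>A\<^sup>k \<eta>\<close> are eigenvectors of \<open>A\<close>.\<close>

lemma mv_periodic_average:
  assumes fx: "mv (mpow A d) \<eta> = \<eta>" and d: "d > 0" and u: "cmod u = 1" "u ^ d = 1"
  shows "mv A (\<lambda>i. \<Sum>k<d. cnj u ^ k * mv (mpow A k) \<eta> i) =
    (\<lambda>i. u * (\<Sum>k<d. cnj u ^ k * mv (mpow A k) \<eta> i))"
proof
  fix i
  obtain n where dn: "d = Suc n" using d by (cases d) auto
  have uc: "u * cnj u = 1" using u(1) by (simp add: complex_norm_square[symmetric])
  have "cnj u ^ n = cnj u ^ n * (cnj u * u)" using uc by (simp add: mult.commute)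
  also have "\<dots> = cnj (u ^ d) * u" using dn by (simp add: mult_ac)
  finally have cn: "cnj u ^ n = u" using u(2) by simp
  have e: "u * (cnj u ^ Suc k * y) = cnj u ^ k * y" for k y
    by (simp add: uc flip: mult.assoc)
  have "mv A (\<lambda>i. \<Sum>k<d. cnj u ^ k * mv (mpow A k) \<eta> i) i =
      (\<Sum>k<d. cnj u ^ k * mv (mpow A (Suc k)) \<eta> i)"
    by (simp add: mv_lincomb_sum mv_mm)
  also have "\<dots> = (\<Sum>k<n. cnj u ^ k * mv (mpow A (Suc k)) \<eta> i) + cnj u ^ n * \<eta> i"
    using fx dn by simp
  also have "\<dots> = u * \<eta> i + (\<Sum>k<n. u * (cnj u ^ Suc k * mv (mpow A (Suc k)) \<eta> i))"
    by (simp only: e cn add.commute)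
  also have "\<dots> = u * (\<Sum>k<d. cnj u ^ k * mv (mpow A k) \<eta> i)"
    unfolding dn sum.lessThan_Suc_shift by (simp add: distrib_left sum_distrib_left)
  finally show "mv A (\<lambda>i. \<Sum>k<d. cnj u ^ k * mv (mpow A k) \<eta> i) i =
      u * (\<Sum>k<d. cnj u ^ k * mv (mpow A k) \<eta> i)" .
qed

lemma periodic_in_cspan_unimodular_eigenvectors:
  assumes d: "d > 0" and fx: "mv (mpow A d) \<eta> = \<eta>"
  shows "\<eta> \<in> cspan (unimodular_eigenvectors A)"
proof -
  define \<omega> where "\<omega> = cis (2 * pi / real d)"
  note R = cis_root_of_unity[OF d, folded \<omega>_def]
  define P where "P j = (\<lambda>i. \<Sum>k<d. cnj (\<omega> ^ j) ^ k * mv (mpow A k) \<eta> i)" for j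
  have P: "P j \<in> cspan (unimodular_eigenvectors A)" for j
  proof (cases "P j = (\<lambda>_. 0)")
    case False
    have u: "cmod (\<omega> ^ j) = 1" "(\<omega> ^ j) ^ d = 1"
      using R(1,2) by (simp_all add: norm_power flip: power_mult) (metis mult.commute power_mult power_one)
    then have "mv A (P j) = (\<lambda>i. \<omega> ^ j * P j i)"
      unfolding P_def by (rule mv_periodic_average[OF fx d])
    then show ?thesis
      using False u unfolding unimodular_eigenvectors_def by (blast intro: cspan_base)
  qed (simp add: cspan_zero)
  have "(\<Sum>j<d. P j i) = (\<Sum>k<d. (\<Sum>j<d. cnj (\<omega> ^ j) ^ k) * mv (mpow A k) \<eta> i)" for i
    unfolding P_def by (subst sum.swap) (simp add: sum_distrib_right)
  also have "\<dots> i = (\<Sum>k<d. (if k = 0 then of_nat d else 0) * mv (mpow A k) \<eta> i)" for i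
    using sum_powers_cis_root_of_unity[OF d, folded \<omega>_def] by (intro sum.cong) auto
  also have "\<dots> i = of_nat d * \<eta> i" for i
    using d by (simp add: if_distrib[of "\<lambda>x. x * _"] sum.delta cong: if_cong)
  finally have "\<eta> = (\<lambda>i. (1 / of_nat d) * (\<Sum>j<d. P j i))"
    using d by simp
  also have "\<dots> = (\<lambda>i. \<Sum>j<d. (1 / of_nat d) * P j i)"
    by (simp only: sum_distrib_left)
  also have "\<dots> \<in> cspan (unimodular_eigenvectors A)"
    by (intro cspan_sum cspan_scale P) simp
  finally show ?thesis .
qed

lemma cspan_unimodular_eigenvectors_eq_periodic:
  assumes d: "d > 0" and dG: "\<forall>z\<in>unimodular_eigenvalues A. z ^ d = 1"
  shows "cspan (unimodular_eigenvectors A) = {\<eta>. mv (mpow A d) \<eta> = \<eta>}"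
proof
  show "{\<eta>. mv (mpow A d) \<eta> = \<eta>} \<subseteq> cspan (unimodular_eigenvectors A)"
    using periodic_in_cspan_unimodular_eigenvectors[OF d] by blast
  show "cspan (unimodular_eigenvectors A) \<subseteq> {\<eta>. mv (mpow A d) \<eta> = \<eta>}"
  proof
    fix v assume "v \<in> cspan (unimodular_eigenvectors A)"
    then obtain S c where S: "finite S" "S \<subseteq> unimodular_eigenvectors A" "v = (\<lambda>i. \<Sum>x\<in>S. c x * x i)"
      unfolding cspan_def by blast
    have "mv (mpow A d) x = x" if "x \<in> S" for x
    proof -
      from that S(2) obtain z where z: "x \<noteq> (\<lambda>_. 0)" "cmod z = 1" "mv A x = (\<lambda>i. z * x i)"
        unfolding unimodular_eigenvectors_def by blast
      then have "z ^ d = 1" using dG unfolding unimodular_eigenvalues_def by blast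
      then show ?thesis using mv_mpow_eigen[OF z(3), of d] by simp
    qed
    then show "v \<in> {\<eta>. mv (mpow A d) \<eta> = \<eta>}" by (simp add: S(3) mv_lincomb_sum)
  qed
qed

section \<open>Contractions and the mean ergodic decomposition\<close>

lemma adj_eigen_contraction:
  assumes contr: "\<And>x. sqnorm (mv C x) \<le> sqnorm x"
    and e: "mv (adj C) w = (\<lambda>i. z * w i)" and z: "cmod z = 1"
  shows "mv C w = (\<lambda>i. cnj z * w i)"
proof -
  have zz: "z * cnj z = 1" using z by (simp add: complex_norm_square[symmetric])
  have "cinner (mv C w) (\<lambda>i. cnj z * w i) = z * cinner w (mv (adj C) w)"
    by (simp add: cinner_scale_right cinner_adj)
  also have "\<dots> = of_real (sqnorm w)"
    unfolding e by (simp add: cinner_scale_right cinner_self mult.assoc[symmetric] zz)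
  finally have "sqnorm (\<lambda>i. mv C w i - cnj z * w i) = sqnorm (mv C w) - sqnorm w"
    using z by (simp add: sqnorm_diff sqnorm_scale)
  also have "\<dots> \<le> 0" using contr[of w] by simp
  finally show ?thesis
    using sqnorm_nonneg sqnorm_eq_0_iff by (metis (no_types, lifting) antisym eq_iff_diff_eq_0 ext)
qed

lemma contraction_fixed_of_orthogonal_range:
  assumes contr: "\<And>x. sqnorm (mv A x) \<le> sqnorm x"
    and orth: "\<And>y. cinner (\<lambda>i. y i - mv A y i) r = 0"
  shows "mv A r = r"
proof -
  have "cinner y (mv (adj A) r) = cinner y r" for y
    using orth[of y] by (simp add: cinner_diff_left cinner_adj)
  then have "mv (adj A) r = (\<lambda>i. 1 * r i)" by (simp add: ext_cinner)
  then show ?thesis using adj_eigen_contraction[OF contr, of r 1] by simp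
qed

lemma subspace_to_vec:
  assumes lin: "\<And>a b x y. x \<in> M \<Longrightarrow> y \<in> M \<Longrightarrow> (\<lambda>i. a * x i + b * y i) \<in> M"
    and M0: "(\<lambda>_. 0) \<in> M"
  shows "subspace (to_vec ` M)"
  unfolding subspace_def
proof (intro conjI ballI allI)
  show "0 \<in> to_vec ` M" using M0 to_vec_eq_0_iff by (metis image_eqI)
  fix x y assume "x \<in> to_vec ` M" "y \<in> to_vec ` M"
  then obtain a b where ab: "a \<in> M" "b \<in> M" "x = to_vec a" "y = to_vec b" by blast
  have "x + y = to_vec (\<lambda>i. 1 * a i + 1 * b i)" unfolding ab to_vec_def by (simp add: vec_eq_iff)
  then show "x + y \<in> to_vec ` M" using lin[OF ab(1,2)] by blast
next
  fix c :: real and x assume "x \<in> to_vec ` M"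
  then obtain a where a: "a \<in> M" "x = to_vec a" by blast
  have "c *\<^sub>R x = to_vec (\<lambda>i. of_real c * a i + 0 * a i)"
    unfolding a to_vec_def vec_eq_iff vector_scaleR_component by (simp add: scaleR_conv_of_real)
  then show "c *\<^sub>R x \<in> to_vec ` M" using lin[OF a(1) a(1)] by blast
qed

text \<open>The decomposition is taken in \<open>complex ^ 'i\<close> viewed as a real inner product space; orthogonality
  over \<open>\<complex>\<close> follows because \<open>M\<close> is also closed under multiplication by \<open>\<i>\<close>.\<close>

lemma orthogonal_decomposition:
  assumes lin: "\<And>a b x y. x \<in> M \<Longrightarrow> y \<in> M \<Longrightarrow> (\<lambda>i. a * x i + b * y i) \<in> M"
    and M0: "(\<lambda>_. 0) \<in> M"
  shows "\<exists>m\<in>M. \<exists>r. e = (\<lambda>i. m i + r i) \<and> (\<forall>x\<in>M. cinner x r = 0)"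
proof -
  have sub: "subspace (to_vec ` M)" by (rule subspace_to_vec[OF lin M0])
  then have spanM: "span (to_vec ` M) = to_vec ` M" by (simp add: span_eq_iff)
  obtain mv' z where mz: "mv' \<in> span (to_vec ` M)" "\<And>w. w \<in> span (to_vec ` M) \<Longrightarrow> orthogonal z w"
      "to_vec e = mv' + z"
    using orthogonal_subspace_decomp_exists[of "to_vec ` M" "to_vec e"] by blast
  obtain m where m: "m \<in> M" "mv' = to_vec m" using mz(1) unfolding spanM by blast
  define r where "r = (\<lambda>i. z $ i)"
  have zr: "z = to_vec r" unfolding r_def to_vec_def by simp
  have "e = (\<lambda>i. m i + r i)"
    using mz(3) unfolding m(2) zr to_vec_def by (auto simp: vec_eq_iff)
  moreover have "cinner x r = 0" if x: "x \<in> M" for x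
  proof -
    have "Re (cinner y r) = 0" if "y \<in> M" for y
    proof -
      have "inner (to_vec r) (to_vec y) = 0"
        using mz(2)[of "to_vec y"] that unfolding spanM zr orthogonal_def by simp
      then show ?thesis by (simp add: inner_commute[of "to_vec r"] inner_to_vec cinner_cnj[of y r])
    qed
    from this[OF x] this[OF lin[OF x x, of \<i> 0]] show ?thesis
      by (simp add: cinner_scale_left complex_eq_iff)
  qed
  ultimately show ?thesis using m(1) by blast
qed

lemma range_orthogonal_decomposition:
  "\<exists>y0 r. e = (\<lambda>i. (y0 i - mv A y0 i) + r i) \<and> (\<forall>y. cinner (\<lambda>i. y i - mv A y i) r = 0)"
proof -
  let ?M = "{(\<lambda>i. y i - mv A y i) | y. True}"
  have "(\<lambda>i. a * x i + b * x' i) \<in> ?M" if x: "x \<in> ?M" and x': "x' \<in> ?M" for a b x x'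
  proof -
    obtain y y' where y: "x = (\<lambda>i. y i - mv A y i)" "x' = (\<lambda>i. y' i - mv A y' i)"
      using x x' by blast
    have "(\<lambda>i. a * x i + b * x' i) =
        (\<lambda>i. (a * y i + b * y' i) - mv A (\<lambda>i. a * y i + b * y' i) i)"
      unfolding y by (simp add: mv_add mv_scale algebra_simps)
    then show ?thesis by (intro CollectI exI[of _ "\<lambda>i. a * y i + b * y' i"]) simp
  qed
  moreover have "(\<lambda>_. 0) \<in> ?M" by (intro CollectI exI[of _ "\<lambda>_. 0"]) simp
  ultimately have "\<exists>m\<in>?M. \<exists>r. e = (\<lambda>i. m i + r i) \<and> (\<forall>x\<in>?M. cinner x r = 0)"
    by (rule orthogonal_decomposition)
  then obtain y0 r where e: "e = (\<lambda>i. (y0 i - mv A y0 i) + r i)" and orth: "\<forall>x\<in>?M. cinner x r = 0"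
    by blast
  have "cinner (\<lambda>i. y i - mv A y i) r = 0" for y using orth by blast
  with e show ?thesis by blast
qed

lemma norm_tens_defect_le:
  assumes "unitary_op W"
  shows "cmod (mv W (tens v \<eta>) p - tens v \<eta> p) \<le> 2 * sqrt (sqnorm v * sqnorm \<eta>)"
proof -
  have "cmod (mv W (tens v \<eta>) p) \<le> sqrt (sqnorm v * sqnorm \<eta>)"
    using norm_component_le[of "mv W (tens v \<eta>)" p] by (simp add: unitary_sqnorm[OF assms] sqnorm_tens)
  moreover have "cmod (tens v \<eta> p) \<le> sqrt (sqnorm v * sqnorm \<eta>)"
    using norm_component_le[of "tens v \<eta>" p] by (simp add: sqnorm_tens)
  ultimately show ?thesis using norm_triangle_ineq4[of "mv W (tens v \<eta>) p" "tens v \<eta> p"] by linarith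
qed

lemma bounded_constant_increment:
  fixes a :: "nat \<Rightarrow> complex"
  assumes step: "\<And>n. a (Suc n) = a n + c" and bound: "\<And>n. cmod (a n) \<le> K"
  shows "c = 0"
proof (rule ccontr)
  assume "c \<noteq> 0"
  then obtain N :: nat where N: "2 * K < of_nat N * cmod c"
    using ex_less_of_nat_mult[of "cmod c" "2 * K"] by auto
  have "a N = a 0 + of_nat N * c" by (induction N) (simp_all add: step algebra_simps)
  then have "of_nat N * cmod c = cmod (a N - a 0)" by (simp add: norm_mult)
  also have "\<dots> \<le> 2 * K" using norm_triangle_ineq4[of "a N" "a 0"] bound[of N] bound[of 0] by simp
  finally show False using N by simp
qed

section \<open>Fixed vectors of the slice map and the subspaces \<open>H\<^sup>f\<close>\<close>

definition vector_slice :: "('i::finite \<times> 'i) hop \<Rightarrow> 'i hvec \<Rightarrow> 'i hvec \<Rightarrow> 'i hvec" where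
  "vector_slice W g \<eta> = (\<lambda>b. \<Sum>y\<in>UNIV. cnj (g y) * mv W (tens g \<eta>) (y, b))"

lemma vector_slice_fixed:
  assumes "mv W (tens g \<eta>) = tens g \<eta>"
  shows "vector_slice W g \<eta> = (\<lambda>b. of_real (sqnorm g) * \<eta> b)"
proof
  fix b
  have "vector_slice W g \<eta> b = \<eta> b * (\<Sum>y\<in>UNIV. g y * cnj (g y))"
    unfolding vector_slice_def assms by (simp add: tens_def sum_distrib_left mult_ac)
  then show "vector_slice W g \<eta> b = of_real (sqnorm g) * \<eta> b"
    using cinner_self[of g] unfolding cinner_def by (simp add: mult.commute)
qed

lemma mm_adj_row_op:
  "mm (adj (row_op W v y)) (row_op W v' z) =
   (\<lambda>u u'. \<Sum>c\<in>UNIV. \<Sum>a\<in>UNIV. (cnj (v c) * v' a) * mm (adj (block W y c)) (block W z a) u u')"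
proof (intro ext)
  fix u u'
  have "mm (adj (row_op W v y)) (row_op W v' z) u u' =
      (\<Sum>x\<in>UNIV. \<Sum>c\<in>UNIV. \<Sum>a\<in>UNIV. cnj (W (x, y) (u, c)) * cnj (v c) * (W (x, z) (u', a) * v' a))"
    unfolding mm_def row_op_def adj_def by (simp add: sum_product)
  also have "\<dots> = (\<Sum>c\<in>UNIV. \<Sum>a\<in>UNIV. \<Sum>x\<in>UNIV.
      cnj (W (x, y) (u, c)) * cnj (v c) * (W (x, z) (u', a) * v' a))"
    by (rule sum_rotate3)
  finally show "mm (adj (row_op W v y)) (row_op W v' z) u u' =
      (\<Sum>c\<in>UNIV. \<Sum>a\<in>UNIV. (cnj (v c) * v' a) * mm (adj (block W y c)) (block W z a) u u')"
    unfolding mm_def block_def adj_def by (simp add: sum_distrib_left mult_ac)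
qed

context mu_state
begin

lemma contraction_mpow: "sqnorm (mv (mpow T k) x) \<le> sqnorm x"
  by (induction k) (auto simp: mv_mm intro: order_trans[OF contraction])

lemma periodic_isometric:
  assumes d: "d > 0" and fx: "mv (mpow T d) \<eta> = \<eta>"
  shows "sqnorm (mv T \<eta>) = sqnorm \<eta>"
proof -
  obtain m where m: "d = Suc m" using d by (cases d) auto
  have "sqnorm \<eta> = sqnorm (mv (mpow T m) (mv T \<eta>))"
    using fx by (simp only: m mv_mpow_Suc_right)
  also have "\<dots> \<le> sqnorm (mv T \<eta>)" by (rule contraction_mpow)
  finally show ?thesis using contraction[of \<eta>] by simp
qed

lemma periodic_orbit_isometric:
  assumes "d > 0" "mv (mpow T d) \<eta> = \<eta>"
  shows "sqnorm (mv T (mv (mpow T k) \<eta>)) = sqnorm (mv (mpow T k) \<eta>)"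
  by (rule periodic_isometric[OF assms(1) mv_mpow_periodic(1)[OF assms(2)]])

lemma periodic_cinner:
  assumes "d > 0" "mv (mpow T d) w = w"
  shows "cinner (mv (mpow T k) y) (mv (mpow T k) w) = cinner y w"
  by (induction k) (simp_all add: mv_mm isometric_cinner periodic_orbit_isometric[OF assms])

lemma psi_block_pentagon:
  "\<psi> (\<lambda>u u'. \<Sum>a'\<in>UNIV. W (a, b) (a', b') * W (u, a') (u', c)) =
   (\<Sum>y\<in>UNIV. \<Sum>w\<in>UNIV. W (y, w) (c, b') * \<psi> (mm (block W a y) (block W b w)))"
proof -
  have "(\<Sum>a'\<in>UNIV. W (a, b) (a', b') * W (u, a') (u', c)) =
      (\<Sum>x\<in>UNIV. \<Sum>y\<in>UNIV. \<Sum>w\<in>UNIV. W (y, w) (c, b') * (W (u, a) (x, y) * W (x, b) (u', w)))" for u u'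
    using pentagon_coords[OF mu, of u a b u' c b'] by (simp add: mult_ac)
  also have "\<dots> u u' = (\<Sum>y\<in>UNIV. \<Sum>w\<in>UNIV. W (y, w) (c, b') * mm (block W a y) (block W b w) u u')"
    for u u'
    unfolding mm_def block_def by (subst sum_rotate3) (simp add: sum_distrib_left)
  finally show ?thesis
    by (simp add: linear_functional_sum2[OF psi_linear] linear_functional_scale[OF psi_linear])
qed

lemma mv_tens_Lslice:
  "mv W (tens (mv T x) \<eta>) (a, b) =
   (\<Sum>y\<in>UNIV. \<Sum>w\<in>UNIV. \<psi> (mm (block W a y) (block W b w)) * mv W (tens x \<eta>) (y, w))"
proof -
  have Wx: "mv W (tens x \<eta>) (y, w) = (\<Sum>b'\<in>UNIV. \<Sum>c\<in>UNIV. W (y, w) (c, b') * (x c * \<eta> b'))" for y w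
    unfolding mv_def tens_def by (simp add: sum_UNIV_prod) (rule sum.swap)
  have "mv W (tens (mv T x) \<eta>) (a, b) =
      (\<Sum>a'\<in>UNIV. \<Sum>b'\<in>UNIV. \<Sum>c\<in>UNIV. (x c * \<eta> b') * (W (a, b) (a', b') * \<psi> (block W a' c)))"
    unfolding mv_def[of W] tens_def mv_Lslice_block
    by (simp add: sum_UNIV_prod sum_distrib_left sum_distrib_right mult_ac)
  also have "\<dots> = (\<Sum>b'\<in>UNIV. \<Sum>c\<in>UNIV. (x c * \<eta> b') *
      \<psi> (\<lambda>u u'. \<Sum>a'\<in>UNIV. W (a, b) (a', b') * W (u, a') (u', c)))"
    by (subst sum_rotate3)
      (simp add: linear_functional_sum[OF psi_linear] linear_functional_scale[OF psi_linear]
        block_def sum_distrib_left)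
  also have "\<dots> = (\<Sum>b'\<in>UNIV. \<Sum>c\<in>UNIV. \<Sum>y\<in>UNIV. \<Sum>w\<in>UNIV.
      \<psi> (mm (block W a y) (block W b w)) * (W (y, w) (c, b') * (x c * \<eta> b')))"
    by (simp only: psi_block_pentagon) (simp add: sum_distrib_left mult_ac)
  also have "\<dots> = (\<Sum>y\<in>UNIV. \<Sum>w\<in>UNIV. \<psi> (mm (block W a y) (block W b w)) * mv W (tens x \<eta>) (y, w))"
    by (subst sum_swap_pairs) (simp add: Wx sum_distrib_left)
  finally show ?thesis .
qed

lemma psi_mm_row_op: "\<psi> (mm Z (row_op W v b)) = (\<Sum>w\<in>UNIV. v w * \<psi> (mm Z (block W b w)))"
proof -
  have "mm Z (row_op W v b) = (\<lambda>i j. \<Sum>w\<in>UNIV. v w * mm Z (block W b w) i j)"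
    unfolding row_op_block mm_def
    by (intro ext) (simp add: sum_distrib_left mult_ac, rule sum.swap)
  then show ?thesis
    by (simp add: linear_functional_sum[OF psi_linear] linear_functional_scale[OF psi_linear])
qed

lemma tens_Lslice_step:
  assumes iso: "sqnorm (mv T \<eta>') = sqnorm \<eta>'" and fx: "mv W (tens x \<eta>) = tens x \<eta>'"
  shows "mv W (tens (mv T x) \<eta>) = tens (mv T x) (mv T \<eta>')"
proof (rule ext, clarify)
  fix a b
  have "mv W (tens (mv T x) \<eta>) (a, b) =
      (\<Sum>y\<in>UNIV. \<Sum>w\<in>UNIV. \<psi> (mm (block W a y) (block W b w)) * (x y * \<eta>' w))"
    by (simp only: mv_tens_Lslice fx) (simp add: tens_def)
  also have "\<dots> = (\<Sum>y\<in>UNIV. x y * \<psi> (mm (block W a y) (row_op W \<eta>' b)))"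
    by (simp add: psi_mm_row_op sum_distrib_left mult_ac)
  also have "\<dots> = (\<Sum>y\<in>UNIV. x y * (mv T \<eta>' b * \<psi> (block W a y)))"
    by (simp add: multiplicative_domain(1)[OF iso])
  also have "\<dots> = tens (mv T x) (mv T \<eta>') (a, b)"
    by (simp add: tens_def mv_Lslice_block sum_distrib_left sum_distrib_right mult_ac)
  finally show "mv W (tens (mv T x) \<eta>) (a, b) = tens (mv T x) (mv T \<eta>') (a, b)" .
qed

lemma fixed_vec_orbit:
  assumes e0: "fixed_vec W e0" and d: "d > 0" and \<eta>: "mv (mpow T d) \<eta> = \<eta>"
  shows "mv W (tens (mv (mpow T k) e0) \<eta>) = tens (mv (mpow T k) e0) (mv (mpow T k) \<eta>)"
proof (induction k)
  case 0
  then show ?case using e0 by (simp add: fixed_vec_def)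
next
  case (Suc k)
  then show ?case by (simp add: mv_mm tens_Lslice_step periodic_orbit_isometric[OF d \<eta>])
qed

lemma psi_block_pentagon_adj12:
  "(\<Sum>b'\<in>UNIV. W (y, b') (y', c) * \<psi> (block W b b')) =
   (\<Sum>p\<in>UNIV. \<Sum>p'\<in>UNIV. W (p, b) (p', c) * \<psi> (mm (adj (block W p y)) (block W p' y')))"
proof -
  have "(\<Sum>b'\<in>UNIV. W (y, b') (y', c) * W (u, b) (u', b')) =
      (\<Sum>x\<in>UNIV. \<Sum>p\<in>UNIV. \<Sum>p'\<in>UNIV. W (p, b) (p', c) * (cnj (W (x, p) (u, y)) * W (x, p') (u', y')))"
    for u u'
    using pentagon_coords_adj12[OF mu, of u b u' y y' c] by (simp add: mult_ac)
  also have "\<dots> u u' = (\<Sum>p\<in>UNIV. \<Sum>p'\<in>UNIV. W (p, b) (p', c) * mm (adj (block W p y)) (block W p' y') u u')"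
    for u u'
    unfolding mm_def block_def adj_def by (subst sum_rotate3) (simp add: sum_distrib_left)
  finally have "\<psi> (\<lambda>u u'. \<Sum>b'\<in>UNIV. W (y, b') (y', c) * W (u, b) (u', b')) =
      (\<Sum>p\<in>UNIV. \<Sum>p'\<in>UNIV. W (p, b) (p', c) * \<psi> (mm (adj (block W p y)) (block W p' y')))"
    by (simp add: linear_functional_sum2[OF psi_linear] linear_functional_scale[OF psi_linear])
  then show ?thesis
    by (simp add: linear_functional_sum[OF psi_linear] linear_functional_scale[OF psi_linear] block_def)
qed

lemma Lslice_vector_slice:
  assumes iso: "sqnorm (mv T g) = sqnorm g"
  shows "mv T (vector_slice W g \<eta>) = vector_slice W (mv T g) \<eta>"
proof
  fix b
  have "mv T (vector_slice W g \<eta>) b = (\<Sum>y\<in>UNIV. \<Sum>y'\<in>UNIV. \<Sum>c\<in>UNIV. \<Sum>b'\<in>UNIV.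
      (cnj (g y) * g y' * \<eta> c) * (W (y, b') (y', c) * \<psi> (block W b b')))"
    unfolding mv_Lslice_block vector_slice_def mv_def[of W] tens_def
    by (subst sum_rotate4[symmetric]) (simp add: sum_UNIV_prod sum_distrib_left sum_distrib_right mult_ac)
  also have "\<dots> = (\<Sum>y\<in>UNIV. \<Sum>y'\<in>UNIV. \<Sum>c\<in>UNIV. \<Sum>p\<in>UNIV. \<Sum>p'\<in>UNIV.
      (\<eta> c * W (p, b) (p', c)) * ((cnj (g y) * g y') * \<psi> (mm (adj (block W p y)) (block W p' y'))))"
    by (simp only: sum_distrib_left[symmetric] psi_block_pentagon_adj12) (simp add: sum_distrib_left mult_ac)
  also have "\<dots> = (\<Sum>p\<in>UNIV. \<Sum>p'\<in>UNIV. \<Sum>c\<in>UNIV. \<Sum>y\<in>UNIV. \<Sum>y'\<in>UNIV.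
      (\<eta> c * W (p, b) (p', c)) * ((cnj (g y) * g y') * \<psi> (mm (adj (block W p y)) (block W p' y'))))"
    by (subst sum_swap_pair_triple) (rule sum_rotate3)
  also have "\<dots> = (\<Sum>p\<in>UNIV. \<Sum>p'\<in>UNIV. \<Sum>c\<in>UNIV. (\<eta> c * W (p, b) (p', c)) * \<psi> (mm (adj (row_op W g p)) (row_op W g p')))"
    by (simp add: mm_adj_row_op linear_functional_sum2[OF psi_linear] linear_functional_scale[OF psi_linear]
        sum_distrib_left)
  also have "\<dots> = (\<Sum>p\<in>UNIV. \<Sum>p'\<in>UNIV. \<Sum>c\<in>UNIV. (\<eta> c * W (p, b) (p', c)) * (cnj (mv T g p) * mv T g p'))"
    by (simp add: multiplicative_domain(2)[OF iso] mv_T)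
  also have "\<dots> = vector_slice W (mv T g) \<eta> b"
    unfolding vector_slice_def mv_def[of W] tens_def by (simp add: sum_UNIV_prod sum_distrib_left mult_ac)
  finally show "mv T (vector_slice W g \<eta>) b = vector_slice W (mv T g) \<eta> b" .
qed

text \<open>\<open>(\<omega>\<^sub>f \<otimes> id)(W)\<close> restricts to \<open>\<parallel>f\<parallel>\<^sup>2 id\<close> on \<open>H\<^sup>f\<close> and, by \<open>Lslice_vector_slice\<close>, commutes with \<open>T\<^sup>d\<close>
  when \<open>T\<^sup>d f = f\<close>.\<close>

lemma Hsup_periodic:
  assumes d: "d > 0" and f: "mv (mpow T d) f = f" "f \<noteq> (\<lambda>_. 0)" and \<eta>: "\<eta> \<in> Hsup W f"
  shows "mv (mpow T d) \<eta> = \<eta>"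
proof -
  have orbit: "mv (mpow T k) (vector_slice W f \<eta>) = vector_slice W (mv (mpow T k) f) \<eta>" for k
    by (induction k) (simp_all add: mv_mm Lslice_vector_slice periodic_orbit_isometric[OF d f(1)])
  have "(\<lambda>i. of_real (sqnorm f) * mv (mpow T d) \<eta> i) = (\<lambda>i. of_real (sqnorm f) * \<eta> i)"
    using orbit[of d] \<eta> f(1) unfolding Hsup_def by (simp add: vector_slice_fixed mv_scale)
  then show ?thesis using f(2) by (auto simp: sqnorm_eq_0_iff fun_eq_iff)
qed

text \<open>Averaging \<open>(T\<^sup>d)\<^sup>n e\<^sub>0 = (T\<^sup>d)\<^sup>n y\<^sub>0 - (T\<^sup>d)\<^sup>n\<^sup>+\<^sup>1 y\<^sub>0 + r\<close> over \<open>n\<close>: the bounded defect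
  \<open>G x = W(x \<otimes> \<eta>) - x \<otimes> \<eta>\<close> vanishes on the orbit of \<open>e\<^sub>0\<close> and so grows linearly in \<open>n\<close> unless
  \<open>G r = 0\<close>.\<close>

lemma fixed_part_in_Hsup:
  assumes d: "d > 0" and e0: "fixed_vec W e0"
    and dec: "e0 = (\<lambda>i. (y0 i - mv (mpow T d) y0 i) + r i)" and r: "mv (mpow T d) r = r"
    and \<eta>: "mv (mpow T d) \<eta> = \<eta>"
  shows "\<eta> \<in> Hsup W r"
proof -
  define G where "G x p = mv W (tens x \<eta>) p - tens x \<eta> p" for x p
  have G_lin: "G (\<lambda>i. (a i - b i) + c i) p = (G a p - G b p) + G c p" for a b c p
  proof -
    have "tens (\<lambda>i. (a i - b i) + c i) \<eta> = (\<lambda>q. (tens a \<eta> q - tens b \<eta> q) + tens c \<eta> q)"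
      by (auto simp: tens_def algebra_simps)
    then show ?thesis unfolding G_def by (simp add: mv_add mv_diff)
  qed
  have orbit: "mv (mpow T (d * n)) e0 =
      (\<lambda>i. (mv (mpow T (d * n)) y0 i - mv (mpow T (d * Suc n)) y0 i) + r i)" for n
  proof -
    have "mpow T (d * Suc n) = mm (mpow T (d * n)) (mpow T d)"
      by (simp add: mpow_add[symmetric] add.commute)
    then show ?thesis
      by (subst dec) (simp add: mv_add mv_diff mv_mm mv_mpow_periodic(2)[OF r])
  qed
  have step: "G (mv (mpow T (d * Suc n)) y0) p = G (mv (mpow T (d * n)) y0) p + G r p" for n p
  proof -
    have "G (mv (mpow T (d * n)) e0) p = 0"
      using fixed_vec_orbit[OF e0 d \<eta>, of "d * n"] mv_mpow_periodic(2)[OF \<eta>] by (simp add: G_def)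
    then have "G (mv (mpow T (d * n)) y0) p - G (mv (mpow T (d * Suc n)) y0) p + G r p = 0"
      by (simp only: orbit G_lin)
    then show ?thesis by (simp add: algebra_simps)
  qed
  have bound: "cmod (G v p) \<le> 2 * sqrt (sqnorm y0 * sqnorm \<eta>)" if "sqnorm v \<le> sqnorm y0" for v p
  proof -
    have "sqrt (sqnorm v * sqnorm \<eta>) \<le> sqrt (sqnorm y0 * sqnorm \<eta>)"
      using that sqnorm_nonneg[of \<eta>] by (simp add: mult_right_mono)
    then show ?thesis
      using norm_tens_defect_le[OF W_unitary, of v \<eta> p] unfolding G_def by linarith
  qed
  have "G r p = 0" for p
    by (rule bounded_constant_increment[where a = "\<lambda>n. G (mv (mpow T (d * n)) y0) p",
          OF step bound[OF contraction_mpow]])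
  then show ?thesis unfolding Hsup_def G_def by (auto simp: fun_eq_iff)
qed

text \<open>The main construction: write the fixed vector \<open>e\<^sub>0\<close> as \<open>(y\<^sub>0 - T\<^sup>d y\<^sub>0) + f\<close> with \<open>f \<perp> ran (I - T\<^sup>d)\<close>,
  where \<open>d\<close> is a common exponent of the eigenvalue group; then \<open>H\<^sup>f\<close> is exactly the space of
  \<open>T\<^sup>d\<close>-fixed vectors. The co-fixed vector \<open>h\<^sub>0\<close> is \<open>T\<^sup>d\<close>-invariant, so \<open>\<langle>f, h\<^sub>0\<rangle> = \<langle>e\<^sub>0, h\<^sub>0\<rangle> \<noteq> 0\<close>.\<close>

lemma cspan_unimodular_eigenvectors_eq_Hsup:
  assumes e0: "fixed_vec W e0" and h0: "cofixed_vec W h0" and e0h0: "cinner e0 h0 \<noteq> 0"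
  obtains f where "f \<noteq> (\<lambda>_. 0)" "mv W (tens f f) = tens f f"
    "cspan (unimodular_eigenvectors T) = Hsup W f"
    "cinner f e0 = of_real (sqnorm f)" "cinner f h0 = cinner e0 h0"
proof -
  have "h0 \<noteq> (\<lambda>_. 0)" using e0h0 by auto
  then obtain d where d: "d > 0" "\<forall>z\<in>unimodular_eigenvalues T. z ^ d = 1"
    using finite_subgroup_U1_common_exponent[OF finite_subgroup_unimodular_eigenvalues[OF h0]] by blast
  from range_orthogonal_decomposition[of e0 "mpow T d"]
  obtain y0 f where dec: "e0 = (\<lambda>i. (y0 i - mv (mpow T d) y0 i) + f i)"
    and orth: "\<forall>y. cinner (\<lambda>i. y i - mv (mpow T d) y i) f = 0"
    by blast
  have f: "mv (mpow T d) f = f"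
    using contraction_fixed_of_orthogonal_range[OF contraction_mpow] orth by blast
  have Th0: "mv (mpow T d) h0 = h0"
    using mv_mpow_eigen[of T h0 1 d] cofixed_eigenvector[OF h0] by simp
  have "cinner (\<lambda>i. y0 i - mv (mpow T d) y0 i) h0 = 0"
    using periodic_cinner[OF d(1) Th0, of d y0] Th0 by (simp add: cinner_diff_left)
  then have fh0: "cinner f h0 = cinner e0 h0"
    by (subst dec) (simp add: cinner_add_left)
  then have nz: "f \<noteq> (\<lambda>_. 0)" using e0h0 by auto
  have "cinner f e0 = cnj (cinner (\<lambda>i. y0 i - mv (mpow T d) y0 i) f) + cinner f f"
    by (subst dec) (simp add: cinner_add_right cinner_cnj[of f "\<lambda>i. y0 i - mv (mpow T d) y0 i"])
  then have fe0: "cinner f e0 = of_real (sqnorm f)"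
    by (simp add: orth cinner_self)
  have H: "Hsup W f = {\<eta>. mv (mpow T d) \<eta> = \<eta>}"
  proof
    show "Hsup W f \<subseteq> {\<eta>. mv (mpow T d) \<eta> = \<eta>}"
      using Hsup_periodic[OF d(1) f nz] by blast
    show "{\<eta>. mv (mpow T d) \<eta> = \<eta>} \<subseteq> Hsup W f"
      using fixed_part_in_Hsup[OF d(1) e0 dec f] by blast
  qed
  have ff: "mv W (tens f f) = tens f f"
    using fixed_part_in_Hsup[OF d(1) e0 dec f f] unfolding Hsup_def by simp
  show ?thesis
    by (rule that[OF nz ff _ fe0 fh0]) (simp add: H cspan_unimodular_eigenvectors_eq_periodic[OF d])
qed

end

section \<open>The dual multiplicative unitary\<close>

text \<open>\<open>hatV V = \<Sigma> V\<^sup>* \<Sigma>\<close>, with \<open>\<Sigma>\<close> the flip of the two legs.\<close>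

definition hatV :: "('i::finite \<times> 'i) hop \<Rightarrow> ('i \<times> 'i) hop" where
  "hatV V = (\<lambda>(a, b) (a', b'). cnj (V (b', a') (b, a)))"

lemma hatV_apply: "hatV V (a, b) (a', b') = cnj (V (b', a') (b, a))"
  by (simp add: hatV_def)

lemma mm_apply_prod: "mm A B (a, b) (a', b') = (\<Sum>x\<in>UNIV. \<Sum>y\<in>UNIV. A (a, b) (x, y) * B (x, y) (a', b'))"
  unfolding mm_def by (simp add: sum_UNIV_prod)

lemma hatV_unitary:
  assumes u: "unitary_op V"
  shows "unitary_op (hatV V)"
proof -
  have u1: "mm V (adj V) = idop" and u2: "mm (adj V) V = idop"
    using u unfolding unitary_op_def by auto
  have "mm (hatV V) (adj (hatV V)) (a, b) (a', b') = mm (adj V) V (b, a) (b', a')" for a b a' b'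
    by (simp add: mm_apply_prod adj_def hatV_apply) (rule sum.swap)
  moreover have "mm (adj (hatV V)) (hatV V) (a, b) (a', b') = mm V (adj V) (b, a) (b', a')" for a b a' b'
    by (simp add: mm_apply_prod adj_def hatV_apply mult.commute) (rule sum.swap)
  ultimately show ?thesis
    unfolding unitary_op_def u1 u2 by (auto simp: idop_def intro!: hop2_eqI)
qed

lemma hatV_multiplicative_unitary:
  assumes mu: "multiplicative_unitary V"
  shows "multiplicative_unitary (hatV V)"
proof -
  have "(\<Sum>x\<in>UNIV. \<Sum>y\<in>UNIV. \<Sum>w\<in>UNIV. hatV V (u, B) (x, y) * hatV V (x, C) (u', w) * hatV V (y, w) (B', C')) =
      (\<Sum>y\<in>UNIV. hatV V (B, C) (y, C') * hatV V (u, y) (u', B'))" for u B C u' B' C'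
  proof -
    have "(\<Sum>x\<in>UNIV. \<Sum>y\<in>UNIV. \<Sum>w\<in>UNIV. hatV V (u, B) (x, y) * hatV V (x, C) (u', w) * hatV V (y, w) (B', C')) =
        cnj (\<Sum>w\<in>UNIV. \<Sum>y\<in>UNIV. \<Sum>x\<in>UNIV. V (C', B') (w, y) * V (w, u') (C, x) * V (y, x) (B, u))"
      by (subst sum_reverse3[symmetric]) (simp add: hatV_apply mult_ac)
    also have "\<dots> = cnj (\<Sum>y\<in>UNIV. V (B', u') (y, u) * V (C', y) (C, B))"
      by (simp only: pentagon_coords[OF mu])
    finally show ?thesis by (simp add: hatV_apply mult_ac)
  qed
  then show ?thesis
    using hatV_unitary[of V] mu unfolding multiplicative_unitary_def pentagon_iff_coords by blast
qed

lemma mv_hatV_tens: "mv (hatV V) (tens \<xi> \<eta>) (a, b) = mv (adj V) (tens \<eta> \<xi>) (b, a)"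
  unfolding mv_def tens_def adj_def hatV_def by (simp add: sum_UNIV_prod mult_ac) (rule sum.swap)

lemma hatV_fixes_tens_iff:
  assumes u: "unitary_op V"
  shows "mv (hatV V) (tens \<xi> \<eta>) = tens \<xi> \<eta> \<longleftrightarrow> mv V (tens \<eta> \<xi>) = tens \<eta> \<xi>"
proof -
  have "mv (hatV V) (tens \<xi> \<eta>) = tens \<xi> \<eta> \<longleftrightarrow> (\<forall>a b. mv (hatV V) (tens \<xi> \<eta>) (a, b) = tens \<xi> \<eta> (a, b))"
    by (auto simp: fun_eq_iff)
  also have "\<dots> \<longleftrightarrow> (\<forall>a b. mv (adj V) (tens \<eta> \<xi>) (b, a) = tens \<eta> \<xi> (b, a))"
    by (simp only: mv_hatV_tens) (simp add: tens_def mult.commute)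
  also have "\<dots> \<longleftrightarrow> mv (adj V) (tens \<eta> \<xi>) = tens \<eta> \<xi>"
    by (auto simp: fun_eq_iff)
  also have "\<dots> \<longleftrightarrow> mv V (tens \<eta> \<xi>) = tens \<eta> \<xi>"
    using unitary_mv_inverse[OF u] by metis
  finally show ?thesis .
qed

lemma fixed_vec_hatV_iff: "unitary_op V \<Longrightarrow> fixed_vec (hatV V) h \<longleftrightarrow> cofixed_vec V h"
  unfolding fixed_vec_def cofixed_vec_def by (simp add: hatV_fixes_tens_iff)

lemma cofixed_vec_hatV_iff: "unitary_op V \<Longrightarrow> cofixed_vec (hatV V) e \<longleftrightarrow> fixed_vec V e"
  unfolding fixed_vec_def cofixed_vec_def by (simp add: hatV_fixes_tens_iff)

lemma Hsup_hatV: "unitary_op V \<Longrightarrow> Hsup (hatV V) f = Hsub V f"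
  unfolding Hsup_def Hsub_def by (simp add: hatV_fixes_tens_iff)

lemma Lslice_hatV:
  assumes st: "is_state \<psi>"
  shows "Lslice (hatV V) \<psi> = adj (Rslice V \<psi>)"
proof (intro ext)
  fix b b'
  have "(\<lambda>a a'. hatV V (a, b) (a', b')) = adj (\<lambda>a a'. V (b', a) (b, a'))"
    by (auto simp: hatV_apply adj_def)
  then have "Lslice (hatV V) \<psi> b b' = cnj (\<psi> (\<lambda>a a'. V (b', a) (b, a')))"
    unfolding Lslice_def by (simp add: state_adj[OF st])
  then show "Lslice (hatV V) \<psi> b b' = adj (Rslice V \<psi>) b b'"
    by (simp add: adj_def Rslice_def)
qed

section \<open>A co-fixed vector not orthogonal to the fixed vector\<close>

definition normalized_trace :: "'i::finite hop \<Rightarrow> complex" where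
  "normalized_trace A = (\<Sum>a\<in>UNIV. A a a) / of_nat CARD('i)"

lemma mm_adj_self_diag: "mm (adj A) A a a = of_real (sqnorm (mv A (basis_vec a)))"
  using cinner_self[of "mv A (basis_vec a)"]
  by (simp add: mm_def adj_def cinner_def mv_basis_vec mult.commute)

lemma normalized_trace_mm_adj_self:
  "normalized_trace (mm (adj A) (A :: 'i::finite hop)) =
   of_real ((\<Sum>a\<in>UNIV. sqnorm (mv A (basis_vec a))) / real CARD('i))"
  unfolding normalized_trace_def mm_adj_self_diag by simp

lemma normalized_trace_state: "is_state (normalized_trace :: 'i::finite hop \<Rightarrow> complex)"
  unfolding is_state_def linear_functional_def normalized_trace_mm_adj_self
  by (auto simp: normalized_trace_def idop_def sum.distrib add_divide_distrib sum_distrib_left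
      sum_nonneg sqnorm_nonneg)

lemma normalized_trace_faithful:
  assumes "normalized_trace (mm (adj Y) (Y :: 'i::finite hop)) = 0"
  shows "Y = (\<lambda>i j. 0)"
proof -
  have "(\<Sum>a\<in>UNIV. sqnorm (mv Y (basis_vec a))) = 0"
    using assms unfolding normalized_trace_mm_adj_self of_real_eq_0_iff by simp
  then have "mv Y (basis_vec a) = (\<lambda>_. 0)" for a
    by (simp add: sum_nonneg_eq_0_iff sqnorm_nonneg sqnorm_eq_0_iff)
  then show ?thesis by (auto simp: mv_basis_vec fun_eq_iff dest: fun_cong)
qed

lemma Lslice_normalized_trace_idempotent:
  assumes mu: "multiplicative_unitary (V :: ('i::finite \<times> 'i) hop)"
  shows "mm (Lslice V normalized_trace) (Lslice V normalized_trace) = Lslice V normalized_trace"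
proof (intro ext)
  fix c c'
  define n :: complex where "n = of_nat CARD('i)"
  have unitary: "(\<Sum>a\<in>UNIV. \<Sum>b\<in>UNIV. cnj (V (x, y) (a, b)) * V (x, y') (a, b)) = (if y' = y then 1 else 0)"
    for x y y'
  proof -
    have "(\<Sum>a\<in>UNIV. \<Sum>b\<in>UNIV. cnj (V (x, y) (a, b)) * V (x, y') (a, b)) = mm V (adj V) (x, y') (x, y)"
      by (simp add: mm_apply_prod adj_def mult.commute)
    then show ?thesis
      using mu unfolding multiplicative_unitary_def unitary_op_def by (simp add: idop_def)
  qed
  have L: "Lslice V normalized_trace p q = (\<Sum>a\<in>UNIV. V (a, p) (a, q)) / n" for p q
    unfolding Lslice_def normalized_trace_def n_def by simp
  have "mm (Lslice V normalized_trace) (Lslice V normalized_trace) c c' =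
      (\<Sum>w\<in>UNIV. \<Sum>b\<in>UNIV. \<Sum>a\<in>UNIV. V (a, c) (a, w) * V (b, w) (b, c')) / (n * n)"
    unfolding mm_def L by (simp add: sum_distrib_left sum_distrib_right sum_divide_distrib)
  also have "(\<Sum>w\<in>UNIV. \<Sum>b\<in>UNIV. \<Sum>a\<in>UNIV. V (a, c) (a, w) * V (b, w) (b, c')) =
      (\<Sum>a\<in>UNIV. \<Sum>b\<in>UNIV. \<Sum>w\<in>UNIV. V (a, c) (a, w) * V (b, w) (b, c'))"
    by (rule sum_reverse3)
  also have "\<dots> = (\<Sum>a\<in>UNIV. \<Sum>b\<in>UNIV. \<Sum>x\<in>UNIV. \<Sum>y\<in>UNIV. \<Sum>y'\<in>UNIV.
      cnj (V (x, y) (a, b)) * V (y, c) (y', c') * V (x, y') (a, b))"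
    by (simp add: pentagon_coords_adj12[OF mu])
  also have "\<dots> = (\<Sum>x\<in>UNIV. \<Sum>y\<in>UNIV. \<Sum>y'\<in>UNIV. V (y, c) (y', c') *
      (\<Sum>a\<in>UNIV. \<Sum>b\<in>UNIV. cnj (V (x, y) (a, b)) * V (x, y') (a, b)))"
    by (subst sum_swap_pair_triple) (simp add: sum_distrib_left mult_ac)
  also have "\<dots> = n * (\<Sum>y\<in>UNIV. V (y, c) (y, c'))"
    unfolding n_def by (simp add: unitary delta_simps)
  finally show "mm (Lslice V normalized_trace) (Lslice V normalized_trace) c c' = Lslice V normalized_trace c c'"
    unfolding L n_def by simp
qed

lemma cofixed_of_Lslice_trace_fixed:
  assumes u: "unitary_op V" and h: "mv (Lslice V normalized_trace) h = h"
  shows "cofixed_vec V h"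
  unfolding cofixed_vec_def
proof (intro allI ext, clarify)
  fix \<xi> a b
  have "row_defect V normalized_trace h b = (\<lambda>i j. 0)"
    by (rule normalized_trace_faithful, rule row_defect_null[OF u normalized_trace_state]) (simp add: h)
  then have "row_op V h b = (\<lambda>i j. h b * idop i j)"
    unfolding row_defect_def h by (auto simp: fun_eq_iff dest!: fun_cong)
  then show "mv V (tens \<xi> h) (a, b) = tens \<xi> h (a, b)"
    by (simp only: mv_tens_row_op) (simp add: mv_def idop_def tens_def delta_simps mult.commute)
qed

definition vector_state :: "'i::finite hvec \<Rightarrow> 'i hop \<Rightarrow> complex" where
  "vector_state g A = (\<Sum>a\<in>UNIV. \<Sum>a'\<in>UNIV. cnj (g a) * A a a' * g a')"

lemma vector_state_mm_adj_self: "vector_state g (mm (adj A) A) = of_real (sqnorm (mv A g))"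
proof -
  have "vector_state g (mm (adj A) A) = (\<Sum>x\<in>UNIV. \<Sum>a\<in>UNIV. \<Sum>a'\<in>UNIV. cnj (A x a * g a) * (A x a' * g a'))"
    unfolding vector_state_def mm_def adj_def
    by (subst sum_rotate3) (simp add: sum_distrib_left sum_distrib_right mult_ac)
  also have "\<dots> = cinner (mv A g) (mv A g)"
    unfolding cinner_def mv_def by (simp add: sum_distrib_left sum_distrib_right mult_ac)
  finally show ?thesis by (simp add: cinner_self)
qed

lemma vector_state_is_state:
  assumes "sqnorm g = 1"
  shows "is_state (vector_state g)"
  unfolding is_state_def linear_functional_def vector_state_mm_adj_self
proof (intro conjI allI)
  show "vector_state g (\<lambda>i j. A i j + B i j) = vector_state g A + vector_state g B" for A B
    unfolding vector_state_def by (simp add: distrib_left distrib_right sum.distrib)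
  show "vector_state g (\<lambda>i j. c * A i j) = c * vector_state g A" for c A
    unfolding vector_state_def by (simp add: sum_distrib_left mult_ac)
  show "vector_state g idop = 1"
    using assms cinner_self[of g] unfolding vector_state_def idop_def cinner_def
    by (simp add: if_distrib[of "\<lambda>x. _ * x"] if_distrib[of "\<lambda>x. x * _"] mult.commute cong: if_cong)
qed (simp_all add: sqnorm_nonneg)

lemma Lslice_vector_state: "mv (Lslice W (vector_state g)) \<eta> = vector_slice W g \<eta>"
proof
  fix b
  have "mv (Lslice W (vector_state g)) \<eta> b =
      (\<Sum>a\<in>UNIV. \<Sum>a'\<in>UNIV. \<Sum>b'\<in>UNIV. cnj (g a) * (W (a, b) (a', b') * g a' * \<eta> b'))"
    unfolding mv_def Lslice_def vector_state_def
    by (subst sum_rotate3[symmetric]) (simp add: sum_distrib_right sum_distrib_left mult_ac)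
  then show "mv (Lslice W (vector_state g)) \<eta> b = vector_slice W g \<eta> b"
    unfolding vector_slice_def mv_def tens_def by (simp add: sum_UNIV_prod sum_distrib_left mult_ac)
qed

text \<open>\<open>L(\<omega>\<^sub>g) \<eta> = (\<omega>\<^sub>g \<otimes> id)(W) \<eta>\<close>, so \<open>Lslice_vector_slice\<close> with \<open>L(\<omega>\<^sub>g) g = g\<close> gives \<open>L(\<omega>\<^sub>g)\<^sup>2 = L(\<omega>\<^sub>g)\<close>.\<close>

lemma Lslice_vector_state_idempotent:
  assumes mu: "multiplicative_unitary W" and g: "cofixed_vec W g" "sqnorm g = 1"
  shows "mm (Lslice W (vector_state g)) (Lslice W (vector_state g)) = Lslice W (vector_state g)"
proof -
  interpret mu_state W "vector_state g"
    by unfold_locales (rule mu, rule vector_state_is_state[OF g(2)])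
  have Tg: "mv T g = g" by (rule cofixed_eigenvector[OF g(1)])
  then have "mv T (vector_slice W g (basis_vec j)) = vector_slice W g (basis_vec j)" for j
    using Lslice_vector_slice[of g "basis_vec j"] by simp
  then have col: "mv T (mv T (basis_vec j)) = mv T (basis_vec j)" for j
    by (simp only: Lslice_vector_state)
  show ?thesis
  proof (intro ext)
    fix i j
    have "mm T T i j = mv (mm T T) (basis_vec j) i" by (simp add: mv_basis_vec)
    also have "\<dots> = mv T (basis_vec j) i" by (simp only: mv_mm col)
    finally show "mm T T i j = T i j" by (simp add: mv_basis_vec)
  qed
qed

text \<open>An idempotent contraction is an orthogonal projection: were \<open>c = \<langle>Ax, x - Ax\<rangle> \<noteq> 0\<close>, the vector
  \<open>Ax - s c (x - Ax)\<close> for small \<open>s > 0\<close> would be shorter than its image \<open>Ax\<close>.\<close>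

lemma idempotent_contraction_cinner:
  assumes idem: "mm A A = A" and contr: "\<And>x. sqnorm (mv A x) \<le> sqnorm x"
  shows "cinner (mv A x) x = of_real (sqnorm (mv A x))"
proof -
  define u where "u = mv A x"
  define y where "y = (\<lambda>i. x i - u i)"
  have Au: "mv A u = u" unfolding u_def by (simp add: mv_mm[symmetric] idem)
  have Ay: "mv A y = (\<lambda>_. 0)" unfolding y_def by (simp add: mv_diff Au[unfolded u_def] u_def)
  define c where "c = cinner u y"
  have "c = 0"
  proof (rule ccontr)
    assume "c \<noteq> 0"
    define s :: real where "s = 1 / (sqnorm y + 1)"
    have s0: "s > 0" and sy: "s * sqnorm y < 1"
      unfolding s_def using sqnorm_nonneg[of y] by (simp_all add: field_simps)
    define t where "t = - (of_real s * c)"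
    have "mv A (\<lambda>i. u i + t * y i) = u"
      by (simp add: mv_add mv_scale Au Ay)
    then have "sqnorm u \<le> sqnorm (\<lambda>i. u i + t * y i)" using contr[of "\<lambda>i. u i + t * y i"] by simp
    then have "0 \<le> 2 * Re (cnj t * c) + (cmod t)\<^sup>2 * sqnorm y"
      by (simp add: sqnorm_add cinner_scale_right sqnorm_scale c_def)
    also have "Re (cnj t * c) = - s * (cmod c)\<^sup>2"
      unfolding t_def cmod_power2 by (simp add: algebra_simps power2_eq_square)
    also have "(cmod t)\<^sup>2 = s * s * (cmod c)\<^sup>2"
      unfolding t_def using s0 by (simp add: norm_mult power_mult_distrib power2_eq_square)
    finally have "0 \<le> (cmod c)\<^sup>2 * s * (s * sqnorm y - 2)" by (simp add: algebra_simps)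
    moreover have "(cmod c)\<^sup>2 * s > 0" using \<open>c \<noteq> 0\<close> s0 by simp
    ultimately have "s * sqnorm y - 2 \<ge> 0" by (simp add: zero_le_mult_iff)
    then show False using sy by simp
  qed
  have "cinner u x = cinner u u + c"
    unfolding c_def y_def by (simp add: cinner_diff_right)
  then show ?thesis using \<open>c = 0\<close> by (simp add: u_def cinner_self)
qed

lemma cinner_Lslice_normalized_trace:
  fixes V :: "('i::finite \<times> 'i) hop"
  shows "cinner (mv (Lslice V normalized_trace) e) e =
    (\<Sum>a\<in>UNIV. Rslice V (vector_state e) a a) / of_nat CARD('i)"
proof -
  have "cinner (mv (Lslice V normalized_trace) e) e =
      (\<Sum>b\<in>UNIV. \<Sum>b'\<in>UNIV. \<Sum>a\<in>UNIV. cnj (e b) * V (a, b) (a, b') * e b') / of_nat CARD('i)"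
    unfolding cinner_def mv_def Lslice_def normalized_trace_def
    by (simp add: sum_distrib_left sum_distrib_right sum_divide_distrib mult_ac)
  also have "\<dots> = (\<Sum>a\<in>UNIV. Rslice V (vector_state e) a a) / of_nat CARD('i)"
    unfolding Rslice_def vector_state_def by (subst sum_rotate3[symmetric]) simp
  finally show ?thesis .
qed

text \<open>\<open>R(\<omega>\<^sub>e)\<^sup>*\<close> is the slice map of \<open>hatV V\<close> by the vector state of its co-fixed vector \<open>e\<close>, hence an
  orthogonal projection.\<close>

lemma Rslice_vector_state_diag:
  assumes mu: "multiplicative_unitary V" and e: "fixed_vec V e" "sqnorm e = 1"
  shows "Rslice V (vector_state e) a a =
    of_real (sqnorm (mv (Lslice (hatV V) (vector_state e)) (basis_vec a)))"
proof -
  have u: "unitary_op V" using mu unfolding multiplicative_unitary_def by blast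
  have st: "is_state (vector_state e)" by (rule vector_state_is_state[OF e(2)])
  interpret H: mu_state "hatV V" "vector_state e"
    by unfold_locales (rule hatV_multiplicative_unitary[OF mu], rule st)
  have "cofixed_vec (hatV V) e" using e(1) cofixed_vec_hatV_iff[OF u] by blast
  then have idem: "mm H.T H.T = H.T"
    by (rule Lslice_vector_state_idempotent[OF hatV_multiplicative_unitary[OF mu] _ e(2)])
  have "Rslice V (vector_state e) a a = cnj (H.T a a)"
    unfolding Lslice_hatV[OF st] adj_def by simp
  moreover have "H.T a a = of_real (sqnorm (mv H.T (basis_vec a)))"
    using idempotent_contraction_cinner[OF idem H.contraction, of "basis_vec a"]
    by (simp add: cinner_basis_vec_right mv_basis_vec)
  ultimately show ?thesis by simp
qed

lemma cinner_Lslice_normalized_trace_pos: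
  fixes V :: "('i::finite \<times> 'i) hop"
  assumes mu: "multiplicative_unitary V" and e: "fixed_vec V e" "sqnorm e = 1"
  shows "\<exists>r>0. cinner (mv (Lslice V normalized_trace) e) e = of_real r"
proof -
  have u: "unitary_op V" using mu unfolding multiplicative_unitary_def by blast
  let ?P = "Lslice (hatV V) (vector_state e)"
  interpret H: mu_state "hatV V" "vector_state e"
    by unfold_locales (rule hatV_multiplicative_unitary[OF mu], rule vector_state_is_state[OF e(2)])
  have "mv ?P e = e"
    using H.cofixed_eigenvector e(1) cofixed_vec_hatV_iff[OF u] by blast
  then have "?P \<noteq> (\<lambda>i j. 0)"
    using e(2) by (auto simp: mv_def sqnorm_def)
  then obtain a0 where "mv ?P (basis_vec a0) \<noteq> (\<lambda>_. 0)"
    by (auto simp: mv_basis_vec fun_eq_iff)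
  then have "0 < sqnorm (mv ?P (basis_vec a0))" by (rule sqnorm_pos)
  also have "\<dots> \<le> (\<Sum>a\<in>UNIV. sqnorm (mv ?P (basis_vec a)))"
    by (rule member_le_sum) (auto simp: sqnorm_nonneg)
  finally have "(\<Sum>a\<in>UNIV. sqnorm (mv ?P (basis_vec a))) / real CARD('i) > 0" by simp
  moreover have "cinner (mv (Lslice V normalized_trace) e) e =
      of_real ((\<Sum>a\<in>UNIV. sqnorm (mv ?P (basis_vec a))) / real CARD('i))"
    by (simp add: cinner_Lslice_normalized_trace Rslice_vector_state_diag[OF mu e])
  ultimately show ?thesis by blast
qed

lemma cofixed_vec_exists:
  assumes mu: "multiplicative_unitary V" and e: "fixed_vec V e" "sqnorm e = 1"
  obtains h where "cofixed_vec V h" "Im (cinner h e) = 0" "Re (cinner h e) > 0"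
proof
  have u: "unitary_op V" using mu unfolding multiplicative_unitary_def by blast
  let ?h = "mv (Lslice V normalized_trace) e"
  show "cofixed_vec V ?h"
    by (rule cofixed_of_Lslice_trace_fixed[OF u])
      (simp add: mv_mm[symmetric] Lslice_normalized_trace_idempotent[OF mu])
  show "Im (cinner ?h e) = 0" "Re (cinner ?h e) > 0"
    using cinner_Lslice_normalized_trace_pos[OF mu e] by auto
qed

context mu_state
begin

lemma unimodular_eigen_adj:
  assumes e: "mv T w = (\<lambda>i. c * w i)" and c: "cmod c = 1"
  shows "mv (adj T) w = (\<lambda>i. cnj c * w i)"
proof (rule ext_cinner[symmetric])
  fix y
  have cc: "cnj c * c = 1" using c by (simp add: complex_norm_square[symmetric] mult.commute)
  have w: "w = (\<lambda>i. cnj c * mv T w i)" using e cc by (auto simp: mult.assoc[symmetric])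
  have "cinner y (mv (adj T) w) = c * cinner (mv T y) (mv T w)"
    by (subst w) (simp add: cinner_adj[symmetric] cinner_scale_right)
  also have "\<dots> = cinner y (\<lambda>i. cnj c * w i)"
    by (simp add: isometric_cinner[OF unimodular_eigen_isometric[OF e c]] cinner_scale_right)
  finally show "cinner y (\<lambda>i. cnj c * w i) = cinner y (mv (adj T) w)" by simp
qed

lemma unimodular_eigen_adj_iff:
  assumes "cmod z = 1"
  shows "mv (adj T) w = (\<lambda>i. z * w i) \<longleftrightarrow> mv T w = (\<lambda>i. cnj z * w i)"
  using adj_eigen_contraction[OF contraction _ assms] unimodular_eigen_adj[of w "cnj z"] assms
  by auto

lemma unimodular_eigenvectors_adj: "unimodular_eigenvectors (adj T) = unimodular_eigenvectors T"
proof (intro set_eqI iffI)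
  fix x assume "x \<in> unimodular_eigenvectors (adj T)"
  then obtain z where "x \<noteq> (\<lambda>_. 0)" "cmod z = 1" "mv (adj T) x = (\<lambda>i. z * x i)"
    unfolding unimodular_eigenvectors_def by blast
  then show "x \<in> unimodular_eigenvectors T"
    unfolding unimodular_eigenvectors_def
    by (intro CollectI conjI exI[of _ "cnj z"]) (simp_all add: unimodular_eigen_adj_iff)
next
  fix x assume "x \<in> unimodular_eigenvectors T"
  then obtain z where "x \<noteq> (\<lambda>_. 0)" "cmod z = 1" "mv T x = (\<lambda>i. z * x i)"
    unfolding unimodular_eigenvectors_def by blast
  then show "x \<in> unimodular_eigenvectors (adj T)"
    unfolding unimodular_eigenvectors_def
    by (intro CollectI conjI exI[of _ "cnj z"]) (simp_all add: unimodular_eigen_adj)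
qed

lemma unimodular_eigenvalues_adj: "unimodular_eigenvalues (adj T) = cnj ` unimodular_eigenvalues T"
proof -
  have "z \<in> unimodular_eigenvalues (adj T) \<longleftrightarrow> cnj z \<in> unimodular_eigenvalues T" for z
    unfolding unimodular_eigenvalues_def by (auto simp: unimodular_eigen_adj_iff)
  moreover have "z \<in> cnj ` S \<longleftrightarrow> cnj z \<in> S" for z and S :: "complex set"
    by (auto intro: image_eqI[where x = "cnj z"])
  ultimately show ?thesis by blast
qed

end

lemma fixed_scale_iff:
  assumes "c \<noteq> 0"
  shows "mv W (\<lambda>p. c * X p) = (\<lambda>p. c * X p) \<longleftrightarrow> mv W X = X"
  using assms by (auto simp: mv_scale fun_eq_iff)

lemma Hsup_scale: "c \<noteq> 0 \<Longrightarrow> Hsup W (\<lambda>i. c * f i) = Hsup W f"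
  unfolding Hsup_def tens_scale_left by (simp add: fixed_scale_iff)

lemma Hsub_scale: "c \<noteq> 0 \<Longrightarrow> Hsub W (\<lambda>i. c * f i) = Hsub W f"
  unfolding Hsub_def tens_scale_right by (simp add: fixed_scale_iff)

lemma pre_subgroup_normalize:
  assumes f: "f \<noteq> (\<lambda>_. 0)" "mv V (tens f f) = tens f f"
    and fe: "Im (cinner f e) = 0" "Re (cinner f e) > 0"
  shows "\<exists>g. pre_subgroup V e g \<and> Hsup V g = Hsup V f \<and> Hsub V g = Hsub V f"
proof -
  define k where "k = sqrt (sqnorm f)"
  define g where "g = (\<lambda>i. complex_of_real (1 / k) * f i)"
  have k: "k > 0" unfolding k_def using sqnorm_pos[OF f(1)] by simp
  then have c: "complex_of_real (1 / k) \<noteq> 0" by simp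
  have "sqnorm g = 1"
    unfolding g_def sqnorm_scale k_def using sqnorm_pos[OF f(1)]
    by (simp add: norm_divide power_divide sqnorm_nonneg)
  moreover have gg: "tens g g = (\<lambda>p. (complex_of_real (1 / k) * complex_of_real (1 / k)) * tens f f p)"
    unfolding g_def tens_scale_left tens_scale_right by (simp only: mult.assoc)
  have cc: "complex_of_real (1 / k) * complex_of_real (1 / k) \<noteq> 0" using c by simp
  have "mv V (tens g g) = tens g g"
    unfolding gg fixed_scale_iff[OF cc] by (rule f(2))
  moreover have "cinner g e = of_real (1 / k) * cinner f e" unfolding g_def cinner_scale_left ..
  ultimately have "pre_subgroup V e g"
    unfolding pre_subgroup_def hnorm_sqnorm using fe k by simp
  moreover have "Hsup V g = Hsup V f" "Hsub V g = Hsub V f"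
    unfolding g_def using Hsup_scale[OF c] Hsub_scale[OF c] by simp_all
  ultimately show ?thesis by blast
qed

context mu_state
begin

lemma Lslice_eigen_structure:
  assumes e: "fixed_vec W e" and h: "cofixed_vec W h" "Im (cinner h e) = 0" "Re (cinner h e) > 0"
  shows "finite_subgroup_U1 (unimodular_eigenvalues T)
    \<and> (\<exists>f. pre_subgroup W e f \<and> cspan (unimodular_eigenvectors T) = Hsup W f)"
proof
  have "h \<noteq> (\<lambda>_. 0)" "cinner e h \<noteq> 0"
    using h(3) cinner_cnj[of e h] by auto
  then show "finite_subgroup_U1 (unimodular_eigenvalues T)"
    using finite_subgroup_unimodular_eigenvalues[OF h(1)] by blast
  obtain f where f: "f \<noteq> (\<lambda>_. 0)" "mv W (tens f f) = tens f f"
    "cspan (unimodular_eigenvectors T) = Hsup W f" "cinner f e = of_real (sqnorm f)"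
    by (rule cspan_unimodular_eigenvectors_eq_Hsup[OF e h(1) \<open>cinner e h \<noteq> 0\<close>])
  then show "\<exists>f. pre_subgroup W e f \<and> cspan (unimodular_eigenvectors T) = Hsup W f"
    using pre_subgroup_normalize[OF f(1,2), of e] sqnorm_pos[OF f(1)] by auto
qed

end

text \<open>The right slice map is the adjoint of the left slice map of \<open>hatV V\<close>, for which the roles of
  fixed and co-fixed vectors are exchanged.\<close>

lemma Rslice_eigen_structure:
  assumes mu: "multiplicative_unitary V" and st: "is_state \<psi>" and e: "fixed_vec V e"
    and h: "cofixed_vec V h" "Im (cinner h e) = 0" "Re (cinner h e) > 0"
  shows "finite_subgroup_U1 (unimodular_eigenvalues (Rslice V \<psi>))
    \<and> (\<exists>g. pre_subgroup V e g \<and> cspan (unimodular_eigenvectors (Rslice V \<psi>)) = Hsub V g)"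
proof
  have u: "unitary_op V" using mu unfolding multiplicative_unitary_def by blast
  interpret R: mu_state "hatV V" \<psi> by unfold_locales (rule hatV_multiplicative_unitary[OF mu], rule st)
  have Rslice: "Rslice V \<psi> = adj R.T" by (simp add: Lslice_hatV[OF st])
  have e': "cofixed_vec (hatV V) e" and h': "fixed_vec (hatV V) h"
    using e h(1) by (simp_all add: fixed_vec_hatV_iff[OF u] cofixed_vec_hatV_iff[OF u])
  have "e \<noteq> (\<lambda>_. 0)" "cinner h e \<noteq> 0" using h(3) by auto
  then show "finite_subgroup_U1 (unimodular_eigenvalues (Rslice V \<psi>))"
    unfolding Rslice R.unimodular_eigenvalues_adj
    by (intro finite_subgroup_U1_cnj R.finite_subgroup_unimodular_eigenvalues[OF e'])
  obtain g where g: "g \<noteq> (\<lambda>_. 0)" "mv (hatV V) (tens g g) = tens g g"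
    "cspan (unimodular_eigenvectors R.T) = Hsup (hatV V) g" "cinner g e = cinner h e"
    by (rule R.cspan_unimodular_eigenvectors_eq_Hsup[OF h' e' \<open>cinner h e \<noteq> 0\<close>])
  then show "\<exists>g. pre_subgroup V e g \<and> cspan (unimodular_eigenvectors (Rslice V \<psi>)) = Hsub V g"
    using pre_subgroup_normalize[OF g(1), of V e] h(2,3) hatV_fixes_tens_iff[OF u]
    unfolding Rslice R.unimodular_eigenvectors_adj Hsup_hatV[OF u] by auto
qed

theorem proposition3p16:
  fixes V :: "('i::finite \<times> 'i) hop" and e :: "'i hvec" and \<psi> :: "'i hop \<Rightarrow> complex"
  assumes "multiplicative_unitary V"
    and "multiplicity_one V"
    and "fixed_vec V e" and "hnorm e = 1"
    and "is_state \<psi>"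
  shows "finite_subgroup_U1 (unimodular_eigenvalues (Lslice V \<psi>))
    \<and> finite_subgroup_U1 (unimodular_eigenvalues (Rslice V \<psi>))
    \<and> (\<forall>z\<in>unimodular_eigenvalues (Lslice V \<psi>) \<union> unimodular_eigenvalues (Rslice V \<psi>).
          \<exists>n::nat. n > 0 \<and> z ^ n = 1)
    \<and> (\<exists>f g. pre_subgroup V e f \<and> pre_subgroup V e g
          \<and> cspan (unimodular_eigenvectors (Lslice V \<psi>)) = Hsup V f
          \<and> cspan (unimodular_eigenvectors (Rslice V \<psi>)) = Hsub V g)"
proof -
  note mu = assms(1) and e = assms(3) and st = assms(5)
  interpret mu_state V \<psi> by unfold_locales (rule mu, rule st)
  have "sqnorm e = 1" using assms(4) by (simp add: hnorm_sqnorm)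
  then obtain h where h: "cofixed_vec V h" "Im (cinner h e) = 0" "Re (cinner h e) > 0"
    by (rule cofixed_vec_exists[OF mu e])
  from Lslice_eigen_structure[OF e h] Rslice_eigen_structure[OF mu st e h] show ?thesis
    using finite_subgroup_U1_root_of_unity by blast
qed

end
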